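(* Let $\mathsf H$ be a horizontal connection on $\mathsf q_M$. Then for every $m\in M$, $\mathsf H(\mathsf d(m))$ lies in the image of $j_{\Omega(A)}\otimes_Aj_M:\Omega(A)\otimes_AM\to\mathsf T(A)\otimes_A\mathsf S_A(M)$; equivalently $(j_{\Omega(A)}\otimes_Aj_M)\circ(p_{\Omega(A)}\otimes_Ap_M)\circ\mathsf H\circ\mathsf d=\mathsf H\circ\mathsf d$ on $M$.
   Context: Fix a commutative ring $R$, a commutative $R$-algebra $A$ and an $A$-module $M$. "Algebra" means commutative $R$-algebra and "algebra map" means $R$-algebra homomorphism. $\Omega(A)$ is the $A$-module of Kähler differentials of $A$ over $R$, with universal derivation $\mathsf d:A\to\Omega(A)$. Tangent algebras: for an algebra $B$, $\mathsf T(B):=\mathrm{Sym}_B(\Omega(B))$, i.e. the $B$-algebra generated by symbols $\mathsf d(b)$ ($b\in B$) subject to $\mathsf d(b+b')=\mathsf d(b)+\mathsf d(b')$, $\mathsf d(bb')=b\,\mathsf d(b')+b'\,\mathsf d(b)$, $\mathsf d(r1)=0$ ($r\in R$). An algebra map out of $\mathsf T(B)$ is determined by its values on the generators $b$, $\mathsf d(b)$. Write $\mathsf T^2(B)=\mathsf T(\mathsf T(B))$ and denote the universal derivation $\mathsf T(B)\to\mathsf T^2(B)$ by $\mathsf d'$; so $\mathsf T^2(B)$ is generated over $B$ by $\mathsf d(b),\mathsf d'(b),\mathsf d'\mathsf d(b)$. For an algebra map $h:X\to Y$, $\mathsf T(h):\mathsf T(X)\to\mathsf T(Y)$ sends $x\mapsto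 h(x)$ and $\delta_X(x)\mapsto\delta_Y(h(x))$, where $\delta$ denotes the relevant universal derivation ($\mathsf d$ for $B\to\mathsf T(B)$, $\mathsf d'$ for $\mathsf T(B)\to\mathsf T^2(B)$). Algebra maps defined on generators $b\in B$: $\mathsf p_B:B\to\mathsf T(B)$ the inclusion; $0_B:\mathsf T(B)\to B$, $b\mapsto b$, $\mathsf d(b)\mapsto 0$; $\ell_B:\mathsf T^2(B)\to\mathsf T(B)$, $b\mapsto b$, $\mathsf d(b)\mapsto 0$, $\mathsf d'(b)\mapsto0$, $\mathsf d'\mathsf d(b)\mapsto\mathsf d(b)$; $\mathsf c_B:\mathsf T^2(B)\to\mathsf T^2(B)$, $b\mapsto b$, $\mathsf d(b)\mapsto\mathsf d'(b)$, $\mathsf d'(b)\mapsto\mathsf d(b)$, $\mathsf d'\mathsf d(b)\mapsto\mathsf d'\mathsf d(b)$. (These are, read in algebras, the structure maps of the Rosický tangent structure on affine schemes over $R$, i.e. on the opposite of the category of commutative $R$-algebras.) Differential bundle of $M$: $\mathsf S_A(M)$ is the symmetric $A$-algebra on $M$ (generated by $a\in A$, $m\in M$). Algebra maps: $\mathsf q_M:A\to\mathsf S_A(M)$ the inclusion; $\lambda_M:\mathsf T(\mathsf S_A(M))\to\mathsf S_A(M)$, $a\mapsto a$, $m\mapsto0$, $\mathsf d(a)\mapsto 0$, $\mathsf d(m)\mapsto m$. The maps $j_{\Omega(A)}:\Omega(A)\to\mathsf T(A)$, $j_M:M\to\mathsf S_A(M)$ are the inclusions of the degree-one summands and $p_{\Omega(A)}$,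 $p_M$ the projections onto them. A horizontal connection on $\mathsf q_M$ is an algebra map $\mathsf H:\mathsf T(\mathsf S_A(M))\to\mathsf T(A)\otimes_A\mathsf S_A(M)$ such that (H1) $\mathsf H(\mathsf T(\mathsf q_M)(w))=w\otimes1$ for all $w\in\mathsf T(A)$; (H2) $\mathsf H(v)=1\otimes v$ for all $v\in\mathsf S_A(M)$; (H3) $(\ell_A\otimes0_{\mathsf S_A(M)})\circ\theta\circ\mathsf T(\mathsf H)=\mathsf H\circ\ell_{\mathsf S_A(M)}$; (H4) $(0_{\mathsf T(A)}\otimes\lambda_M)\circ\theta\circ\mathsf T(\mathsf H)=\mathsf H\circ\mathsf T(\lambda_M)\circ\mathsf c_{\mathsf S_A(M)}$. Here $\mathsf T^2(A)\otimes_{\mathsf T(A)}\mathsf T(\mathsf S_A(M))$ is formed via $\mathsf T(\mathsf p_A):\mathsf T(A)\to\mathsf T^2(A)$ ($a\mapsto a$, $\mathsf d(a)\mapsto\mathsf d'(a)$) and $\mathsf T(\mathsf q_M)$; $\theta:\mathsf T(\mathsf T(A)\otimes_A\mathsf S_A(M))\to\mathsf T^2(A)\otimes_{\mathsf T(A)}\mathsf T(\mathsf S_A(M))$ is the canonical isomorphism, $w\otimes v\mapsto w\otimes v$, $\mathsf d(w\otimes v)\mapsto\mathsf d'(w)\otimes v+w\otimes\mathsf d(v)$; the maps $\ell_A\otimes0_{\mathsf S_A(M)}$ and $0_{\mathsf T(A)}\otimes\lambda_M$ into $\mathsf T(A)\otimes_A\mathsf S_A(M)$ are induced factorwise, where $0_{\mathsf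 T(A)}:\mathsf T^2(A)\to\mathsf T(A)$ sends $a\mapsto a$, $\mathsf d(a)\mapsto\mathsf d(a)$, $\mathsf d'(a)\mapsto0$, $\mathsf d'\mathsf d(a)\mapsto0$. *)

theory Defs
  imports "HOL-Algebra.Module"
begin

section \<open>Commutative R-algebras as HOL-Algebra rings with a structure map\<close>

record ('a, 'r) ralg = "'a ring" + rmap :: "'r \<Rightarrow> 'a"

definition is_alg :: "'r ring \<Rightarrow> ('a, 'r) ralg \<Rightarrow> bool" where
  "is_alg R A \<longleftrightarrow> cring A \<and> rmap A \<in> ring_hom R A"

definition alg_hom :: "'r ring \<Rightarrow> ('a, 'r) ralg \<Rightarrow> ('b, 'r) ralg \<Rightarrow> ('a \<Rightarrow> 'b) \<Rightarrow> bool" where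
  "alg_hom R A B f \<longleftrightarrow> f \<in> ring_hom A B \<and> (\<forall>r\<in>carrier R. f (rmap A r) = rmap B r)"

text \<open>The (unique) algebra map A -> B satisfying a property P (used with P prescribing the
  values on a generating family); extensional outside the carrier to make it unique.\<close>
definition the_map :: "'r ring \<Rightarrow> ('a, 'r) ralg \<Rightarrow> ('b, 'r) ralg \<Rightarrow> (('a \<Rightarrow> 'b) \<Rightarrow> bool) \<Rightarrow> 'a \<Rightarrow> 'b" where
  "the_map R A B P = (THE f. alg_hom R A B f \<and> f \<in> extensional (carrier A) \<and> P f)"

section \<open>Presented commutative R-algebras (generators and relations)\<close>

datatype ('r, 'x) pexpr = Var 'x | Const 'r | Add "('r, 'x) pexpr" "('r, 'x) pexpr"
  | Mul "('r, 'x) pexpr" "('r, 'x) pexpr" | Neg "('r, 'x) pexpr"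

fun pvars :: "('r, 'x) pexpr \<Rightarrow> 'x set" where
  "pvars (Var x) = {x}" | "pvars (Const r) = {}" | "pvars (Add a b) = pvars a \<union> pvars b"
| "pvars (Mul a b) = pvars a \<union> pvars b" | "pvars (Neg a) = pvars a"

fun pconsts :: "('r, 'x) pexpr \<Rightarrow> 'r set" where
  "pconsts (Var x) = {}" | "pconsts (Const r) = {r}" | "pconsts (Add a b) = pconsts a \<union> pconsts b"
| "pconsts (Mul a b) = pconsts a \<union> pconsts b" | "pconsts (Neg a) = pconsts a"

definition pwf :: "'r ring \<Rightarrow> 'x set \<Rightarrow> ('r, 'x) pexpr \<Rightarrow> bool" where
  "pwf R G e \<longleftrightarrow> pvars e \<subseteq> G \<and> pconsts e \<subseteq> carrier R"

inductive peq :: "'r ring \<Rightarrow> (('r, 'x) pexpr \<times> ('r, 'x) pexpr) set \<Rightarrow> ('r, 'x) pexpr \<Rightarrow> ('r, 'x) pexpr \<Rightarrow> bool"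
  for R Rel where
  rel: "(a, b) \<in> Rel \<Longrightarrow> peq R Rel a b"
| refl: "peq R Rel a a"
| sym: "peq R Rel a b \<Longrightarrow> peq R Rel b a"
| trans: "peq R Rel a b \<Longrightarrow> peq R Rel b c \<Longrightarrow> peq R Rel a c"
| cong_add: "peq R Rel a a' \<Longrightarrow> peq R Rel b b' \<Longrightarrow> peq R Rel (Add a b) (Add a' b')"
| cong_mul: "peq R Rel a a' \<Longrightarrow> peq R Rel b b' \<Longrightarrow> peq R Rel (Mul a b) (Mul a' b')"
| cong_neg: "peq R Rel a a' \<Longrightarrow> peq R Rel (Neg a) (Neg a')"
| add_assoc: "peq R Rel (Add (Add a b) c) (Add a (Add b c))"
| add_comm: "peq R Rel (Add a b) (Add b a)"
| add_zero: "peq R Rel (Add (Const \<zero>\<^bsub>R\<^esub>) a) a"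
| add_neg: "peq R Rel (Add (Neg a) a) (Const \<zero>\<^bsub>R\<^esub>)"
| mul_assoc: "peq R Rel (Mul (Mul a b) c) (Mul a (Mul b c))"
| mul_comm: "peq R Rel (Mul a b) (Mul b a)"
| mul_one: "peq R Rel (Mul (Const \<one>\<^bsub>R\<^esub>) a) a"
| distrib: "peq R Rel (Mul a (Add b c)) (Add (Mul a b) (Mul a c))"
| const_add: "r \<in> carrier R \<Longrightarrow> s \<in> carrier R \<Longrightarrow> peq R Rel (Add (Const r) (Const s)) (Const (r \<oplus>\<^bsub>R\<^esub> s))"
| const_mul: "r \<in> carrier R \<Longrightarrow> s \<in> carrier R \<Longrightarrow> peq R Rel (Mul (Const r) (Const s)) (Const (r \<otimes>\<^bsub>R\<^esub> s))"

definition pclass :: "'r ring \<Rightarrow> 'x set \<Rightarrow> (('r, 'x) pexpr \<times> ('r, 'x) pexpr) set \<Rightarrow> ('r, 'x) pexpr \<Rightarrow> ('r, 'x) pexpr set" where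
  "pclass R G Rel e = {e'. pwf R G e' \<and> peq R Rel e e'}"

definition prep :: "('r, 'x) pexpr set \<Rightarrow> ('r, 'x) pexpr" where
  "prep X = (SOME e. e \<in> X)"

definition pres :: "'r ring \<Rightarrow> 'x set \<Rightarrow> (('r, 'x) pexpr \<times> ('r, 'x) pexpr) set \<Rightarrow> (('r, 'x) pexpr set, 'r) ralg" where
  "pres R G Rel = \<lparr> carrier = {pclass R G Rel e | e. pwf R G e},
     mult = (\<lambda>X Y. pclass R G Rel (Mul (prep X) (prep Y))),
     one = pclass R G Rel (Const \<one>\<^bsub>R\<^esub>),
     zero = pclass R G Rel (Const \<zero>\<^bsub>R\<^esub>),
     add = (\<lambda>X Y. pclass R G Rel (Add (prep X) (prep Y))),
     rmap = (\<lambda>r. pclass R G Rel (Const r)) \<rparr>"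

definition gen :: "(('r, 'x) pexpr set, 'r) ralg \<Rightarrow> 'x \<Rightarrow> ('r, 'x) pexpr set" where
  "gen P x = (THE X. X \<in> carrier P \<and> Var x \<in> X)"

text \<open>Relations saying that a family of generators g indexed by carrier B is an R-algebra map.\<close>
definition hom_rel :: "'r ring \<Rightarrow> ('b, 'r) ralg \<Rightarrow> ('b \<Rightarrow> 'x) \<Rightarrow> (('r, 'x) pexpr \<times> ('r, 'x) pexpr) set" where
  "hom_rel R B g =
     {(Var (g (b \<oplus>\<^bsub>B\<^esub> b')), Add (Var (g b)) (Var (g b'))) | b b'. b \<in> carrier B \<and> b' \<in> carrier B}
   \<union> {(Var (g (b \<otimes>\<^bsub>B\<^esub> b')), Mul (Var (g b)) (Var (g b'))) | b b'. b \<in> carrier B \<and> b' \<in> carrier B}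
   \<union> {(Var (g (rmap B r)), Const r) | r. r \<in> carrier R}"

section \<open>Tangent algebras T(B) = Sym_B(Omega(B))\<close>

datatype 'b tgen = TP 'b | TD 'b

definition tan_rel :: "'r ring \<Rightarrow> ('b, 'r) ralg \<Rightarrow> (('r, 'b tgen) pexpr \<times> ('r, 'b tgen) pexpr) set" where
  "tan_rel R B = hom_rel R B TP
   \<union> {(Var (TD (b \<oplus>\<^bsub>B\<^esub> b')), Add (Var (TD b)) (Var (TD b'))) | b b'. b \<in> carrier B \<and> b' \<in> carrier B}
   \<union> {(Var (TD (b \<otimes>\<^bsub>B\<^esub> b')), Add (Mul (Var (TP b)) (Var (TD b'))) (Mul (Var (TP b')) (Var (TD b))))
        | b b'. b \<in> carrier B \<and> b' \<in> carrier B}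
   \<union> {(Var (TD (rmap B r)), Const \<zero>\<^bsub>R\<^esub>) | r. r \<in> carrier R}"

definition Tan :: "'r ring \<Rightarrow> ('b, 'r) ralg \<Rightarrow> (('r, 'b tgen) pexpr set, 'r) ralg" where
  "Tan R B = pres R (TP ` carrier B \<union> TD ` carrier B) (tan_rel R B)"

text \<open>p_B : B -> T(B) (the element b of T(B)) and d : B -> T(B).\<close>
definition tp :: "'r ring \<Rightarrow> ('b, 'r) ralg \<Rightarrow> 'b \<Rightarrow> ('r, 'b tgen) pexpr set" where
  "tp R B b = gen (Tan R B) (TP b)"

definition td :: "'r ring \<Rightarrow> ('b, 'r) ralg \<Rightarrow> 'b \<Rightarrow> ('r, 'b tgen) pexpr set" where
  "td R B b = gen (Tan R B) (TD b)"

definition tmap_on :: "'r ring \<Rightarrow> ('b, 'r) ralg \<Rightarrow> ('c, 'r) ralg \<Rightarrow> ('b \<Rightarrow> 'c) \<Rightarrow> ('b \<Rightarrow> 'c)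
    \<Rightarrow> ('r, 'b tgen) pexpr set \<Rightarrow> 'c" where
  "tmap_on R B C fp fd = the_map R (Tan R B) C
     (\<lambda>f. \<forall>b\<in>carrier B. f (tp R B b) = fp b \<and> f (td R B b) = fd b)"

definition Tmap :: "'r ring \<Rightarrow> ('b, 'r) ralg \<Rightarrow> ('c, 'r) ralg \<Rightarrow> ('b \<Rightarrow> 'c)
    \<Rightarrow> ('r, 'b tgen) pexpr set \<Rightarrow> ('r, 'c tgen) pexpr set" where
  "Tmap R B C h = tmap_on R B (Tan R C) (\<lambda>b. tp R C (h b)) (\<lambda>b. td R C (h b))"

definition t2map_on :: "'r ring \<Rightarrow> ('b, 'r) ralg \<Rightarrow> ('c, 'r) ralg
    \<Rightarrow> ('b \<Rightarrow> 'c) \<Rightarrow> ('b \<Rightarrow> 'c) \<Rightarrow> ('b \<Rightarrow> 'c) \<Rightarrow> ('b \<Rightarrow> 'c)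
    \<Rightarrow> ('r, ('r, 'b tgen) pexpr set tgen) pexpr set \<Rightarrow> 'c" where
  "t2map_on R B C f1 f2 f3 f4 = the_map R (Tan R (Tan R B)) C
     (\<lambda>f. \<forall>b\<in>carrier B.
        f (tp R (Tan R B) (tp R B b)) = f1 b \<and>
        f (tp R (Tan R B) (td R B b)) = f2 b \<and>
        f (td R (Tan R B) (tp R B b)) = f3 b \<and>
        f (td R (Tan R B) (td R B b)) = f4 b)"

definition zmap :: "'r ring \<Rightarrow> ('b, 'r) ralg \<Rightarrow> ('r, 'b tgen) pexpr set \<Rightarrow> 'b" where
  "zmap R B = tmap_on R B B (\<lambda>b. b) (\<lambda>b. \<zero>\<^bsub>B\<^esub>)"

definition lift :: "'r ring \<Rightarrow> ('b, 'r) ralg \<Rightarrow> ('r, ('r, 'b tgen) pexpr set tgen) pexpr set \<Rightarrow> ('r, 'b tgen) pexpr set" where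
  "lift R B = t2map_on R B (Tan R B) (tp R B) (\<lambda>b. \<zero>\<^bsub>Tan R B\<^esub>) (\<lambda>b. \<zero>\<^bsub>Tan R B\<^esub>) (td R B)"

definition canflip :: "'r ring \<Rightarrow> ('b, 'r) ralg \<Rightarrow> ('r, ('r, 'b tgen) pexpr set tgen) pexpr set
    \<Rightarrow> ('r, ('r, 'b tgen) pexpr set tgen) pexpr set" where
  "canflip R B = t2map_on R B (Tan R (Tan R B))
     (\<lambda>b. tp R (Tan R B) (tp R B b)) (\<lambda>b. td R (Tan R B) (tp R B b))
     (\<lambda>b. tp R (Tan R B) (td R B b)) (\<lambda>b. td R (Tan R B) (td R B b))"

definition zmapT :: "'r ring \<Rightarrow> ('b, 'r) ralg \<Rightarrow> ('r, ('r, 'b tgen) pexpr set tgen) pexpr set \<Rightarrow> ('r, 'b tgen) pexpr set" where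
  "zmapT R B = t2map_on R B (Tan R B) (tp R B) (td R B) (\<lambda>b. \<zero>\<^bsub>Tan R B\<^esub>) (\<lambda>b. \<zero>\<^bsub>Tan R B\<^esub>)"

section \<open>Symmetric algebra S_A(M)\<close>

datatype ('a, 'm) sgen = SA 'a | SM 'm

definition sym_rel :: "'r ring \<Rightarrow> ('a, 'r) ralg \<Rightarrow> ('a, 'm) module \<Rightarrow> (('r, ('a, 'm) sgen) pexpr \<times> ('r, ('a, 'm) sgen) pexpr) set" where
  "sym_rel R A M = hom_rel R A SA
   \<union> {(Var (SM (m \<oplus>\<^bsub>M\<^esub> m')), Add (Var (SM m)) (Var (SM m'))) | m m'. m \<in> carrier M \<and> m' \<in> carrier M}
   \<union> {(Var (SM (a \<odot>\<^bsub>M\<^esub> m)), Mul (Var (SA a)) (Var (SM m))) | a m. a \<in> carrier A \<and> m \<in> carrier M}"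

definition Sym :: "'r ring \<Rightarrow> ('a, 'r) ralg \<Rightarrow> ('a, 'm) module \<Rightarrow> (('r, ('a, 'm) sgen) pexpr set, 'r) ralg" where
  "Sym R A M = pres R (SA ` carrier A \<union> SM ` carrier M) (sym_rel R A M)"

text \<open>q_M : A -> S_A(M) and j_M : M -> S_A(M).\<close>
definition sq :: "'r ring \<Rightarrow> ('a, 'r) ralg \<Rightarrow> ('a, 'm) module \<Rightarrow> 'a \<Rightarrow> ('r, ('a, 'm) sgen) pexpr set" where
  "sq R A M a = gen (Sym R A M) (SA a)"

definition sj :: "'r ring \<Rightarrow> ('a, 'r) ralg \<Rightarrow> ('a, 'm) module \<Rightarrow> 'm \<Rightarrow> ('r, ('a, 'm) sgen) pexpr set" where
  "sj R A M m = gen (Sym R A M) (SM m)"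

definition lam :: "'r ring \<Rightarrow> ('a, 'r) ralg \<Rightarrow> ('a, 'm) module
    \<Rightarrow> ('r, ('r, ('a, 'm) sgen) pexpr set tgen) pexpr set \<Rightarrow> ('r, ('a, 'm) sgen) pexpr set" where
  "lam R A M = the_map R (Tan R (Sym R A M)) (Sym R A M)
     (\<lambda>f. (\<forall>a\<in>carrier A. f (tp R (Sym R A M) (sq R A M a)) = sq R A M a
                       \<and> f (td R (Sym R A M) (sq R A M a)) = \<zero>\<^bsub>Sym R A M\<^esub>)
        \<and> (\<forall>m\<in>carrier M. f (tp R (Sym R A M) (sj R A M m)) = \<zero>\<^bsub>Sym R A M\<^esub>
                       \<and> f (td R (Sym R A M) (sj R A M m)) = sj R A M m))"

section \<open>Tensor products of commutative algebras X (x)_C Y along f : C -> X, g : C -> Y\<close>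

datatype ('x, 'y) tsgen = TL 'x | TR 'y

definition tens :: "'r ring \<Rightarrow> ('x, 'r) ralg \<Rightarrow> ('y, 'r) ralg \<Rightarrow> 'c set \<Rightarrow> ('c \<Rightarrow> 'x) \<Rightarrow> ('c \<Rightarrow> 'y)
    \<Rightarrow> (('r, ('x, 'y) tsgen) pexpr set, 'r) ralg" where
  "tens R X Y C f g = pres R (TL ` carrier X \<union> TR ` carrier Y)
     (hom_rel R X TL \<union> hom_rel R Y TR \<union> {(Var (TL (f c)), Var (TR (g c))) | c. c \<in> C})"

definition etens :: "(('r, ('x, 'y) tsgen) pexpr set, 'r) ralg \<Rightarrow> 'x \<Rightarrow> 'y \<Rightarrow> ('r, ('x, 'y) tsgen) pexpr set" where
  "etens P x y = gen P (TL x) \<otimes>\<^bsub>P\<^esub> gen P (TR y)"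

definition tensmap :: "'r ring \<Rightarrow> (('r, ('x, 'y) tsgen) pexpr set, 'r) ralg \<Rightarrow> (('r, ('x', 'y') tsgen) pexpr set, 'r) ralg
    \<Rightarrow> ('x, 'r) ralg \<Rightarrow> ('y, 'r) ralg \<Rightarrow> ('x \<Rightarrow> 'x') \<Rightarrow> ('y \<Rightarrow> 'y')
    \<Rightarrow> ('r, ('x, 'y) tsgen) pexpr set \<Rightarrow> ('r, ('x', 'y') tsgen) pexpr set" where
  "tensmap R P P' X Y \<phi> \<psi> = the_map R P P'
     (\<lambda>F. (\<forall>x\<in>carrier X. F (gen P (TL x)) = gen P' (TL (\<phi> x)))
        \<and> (\<forall>y\<in>carrier Y. F (gen P (TR y)) = gen P' (TR (\<psi> y))))"

definition TE :: "'r ring \<Rightarrow> ('a, 'r) ralg \<Rightarrow> ('a, 'm) module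
    \<Rightarrow> (('r, (('r, 'a tgen) pexpr set, ('r, ('a, 'm) sgen) pexpr set) tsgen) pexpr set, 'r) ralg" where
  "TE R A M = tens R (Tan R A) (Sym R A M) (carrier A) (tp R A) (sq R A M)"

definition TF :: "'r ring \<Rightarrow> ('a, 'r) ralg \<Rightarrow> ('a, 'm) module
    \<Rightarrow> (('r, (('r, ('r, 'a tgen) pexpr set tgen) pexpr set,
              ('r, ('r, ('a, 'm) sgen) pexpr set tgen) pexpr set) tsgen) pexpr set, 'r) ralg" where
  "TF R A M = tens R (Tan R (Tan R A)) (Tan R (Sym R A M)) (carrier (Tan R A))
     (Tmap R A (Tan R A) (tp R A)) (Tmap R A (Sym R A M) (sq R A M))"

definition theta :: "'r ring \<Rightarrow> ('a, 'r) ralg \<Rightarrow> ('a, 'm) module \<Rightarrow> _" where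
  "theta R A M = the_map R (Tan R (TE R A M)) (TF R A M)
     (\<lambda>f. \<forall>w\<in>carrier (Tan R A). \<forall>v\<in>carrier (Sym R A M).
        f (tp R (TE R A M) (etens (TE R A M) w v))
          = etens (TF R A M) (tp R (Tan R A) w) (tp R (Sym R A M) v)
      \<and> f (td R (TE R A M) (etens (TE R A M) w v))
          = etens (TF R A M) (td R (Tan R A) w) (tp R (Sym R A M) v)
            \<oplus>\<^bsub>TF R A M\<^esub> etens (TF R A M) (tp R (Tan R A) w) (td R (Sym R A M) v))"

definition horizontal_connection :: "'r ring \<Rightarrow> ('a, 'r) ralg \<Rightarrow> ('a, 'm) module \<Rightarrow>
    (('r, ('r, ('a, 'm) sgen) pexpr set tgen) pexpr set
       \<Rightarrow> ('r, (('r, 'a tgen) pexpr set, ('r, ('a, 'm) sgen) pexpr set) tsgen) pexpr set) \<Rightarrow> bool" where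
  "horizontal_connection R A M H \<longleftrightarrow>
     alg_hom R (Tan R (Sym R A M)) (TE R A M) H
   \<and> (\<forall>w\<in>carrier (Tan R A). H (Tmap R A (Sym R A M) (sq R A M) w) = etens (TE R A M) w \<one>\<^bsub>Sym R A M\<^esub>)
   \<and> (\<forall>v\<in>carrier (Sym R A M). H (tp R (Sym R A M) v) = etens (TE R A M) \<one>\<^bsub>Tan R A\<^esub> v)
   \<and> (\<forall>x\<in>carrier (Tan R (Tan R (Sym R A M))).
        tensmap R (TF R A M) (TE R A M) (Tan R (Tan R A)) (Tan R (Sym R A M)) (lift R A) (zmap R (Sym R A M))
          (theta R A M (Tmap R (Tan R (Sym R A M)) (TE R A M) H x))
        = H (lift R (Sym R A M) x))
   \<and> (\<forall>x\<in>carrier (Tan R (Tan R (Sym R A M))).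
        tensmap R (TF R A M) (TE R A M) (Tan R (Tan R A)) (Tan R (Sym R A M)) (zmapT R A) (lam R A M)
          (theta R A M (Tmap R (Tan R (Sym R A M)) (TE R A M) H x))
        = H (Tmap R (Tan R (Sym R A M)) (Sym R A M) (lam R A M) (canflip R (Sym R A M) x)))"

inductive_set add_span :: "('b, 'z) ring_scheme \<Rightarrow> 'b set \<Rightarrow> 'b set" for P S where
  zero: "\<zero>\<^bsub>P\<^esub> \<in> add_span P S"
| base: "s \<in> S \<Longrightarrow> s \<in> add_span P S"
| add: "x \<in> add_span P S \<Longrightarrow> y \<in> add_span P S \<Longrightarrow> x \<oplus>\<^bsub>P\<^esub> y \<in> add_span P S"
| neg: "x \<in> add_span P S \<Longrightarrow> \<ominus>\<^bsub>P\<^esub> x \<in> add_span P S"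

text \<open>Image of j_Omega(A) (x)_A j_M : Omega(A) (x)_A M -> T(A) (x)_A S_A(M): since Omega(A) is
  spanned over A by the d(a) and a d(a') (x) m = d(a') (x) (a m), this image is the additive
  subgroup generated by the elements d(a) (x) m.\<close>
definition jj_image :: "'r ring \<Rightarrow> ('a, 'r) ralg \<Rightarrow> ('a, 'm) module \<Rightarrow> _ set" where
  "jj_image R A M = add_span (TE R A M)
     {etens (TE R A M) (td R A a) (sj R A M m) | a m. a \<in> carrier A \<and> m \<in> carrier M}"

end

theory Submission
  imports Defs
begin

text \<open>
  \<open>E = T(A) \<otimes>\<^sub>A S\<^sub>A(M)\<close> is bigraded by the degree in \<open>\<Omega>(A)\<close> and the degree in \<open>M\<close>, and the
  image of \<open>\<Omega>(A) \<otimes>\<^sub>A M\<close> is its part of bidegree \<open>(1,1)\<close>. The composite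
  \<open>(\<ell>\<^sub>A \<otimes> 0) \<circ> \<theta> \<circ> d\<close> is a derivation of \<open>E\<close> that keeps the part of \<open>\<Omega>(A)\<close>-degree one and kills
  the rest, and \<open>(0 \<otimes> \<lambda>\<^sub>M) \<circ> \<theta> \<circ> d\<close> does the same for the \<open>M\<close>-degree. Evaluating (H3) and (H4) at
  \<open>d'd(d m)\<close>, where \<open>\<ell>\<close> and \<open>T(\<lambda>\<^sub>M) \<circ> c\<close> both return \<open>d m\<close>, shows that \<open>H(d m)\<close> is fixed by
  both projections, hence lies in bidegree \<open>(1,1)\<close>.
\<close>

section \<open>Algebra maps and derivations\<close>

lemma is_algD:
  assumes "is_alg R C"
  shows "cring C" "rmap C \<in> ring_hom R C"
  using assms unfolding is_alg_def by auto

lemma is_alg_rmap_closed: "is_alg R A \<Longrightarrow> r \<in> carrier R \<Longrightarrow> rmap A r \<in> carrier A"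
  by (auto simp: is_alg_def ring_hom_closed)

lemma is_alg_zero: "cring R \<Longrightarrow> is_alg R A \<Longrightarrow> rmap A \<zero>\<^bsub>R\<^esub> = \<zero>\<^bsub>A\<^esub>"
  by (auto simp: is_alg_def cring.axioms(1) intro: ring_hom_zero)

lemma is_alg_one: "is_alg R A \<Longrightarrow> rmap A \<one>\<^bsub>R\<^esub> = \<one>\<^bsub>A\<^esub>"
  by (auto simp: is_alg_def ring_hom_one)

lemma alg_hom_closed: "alg_hom R A B f \<Longrightarrow> x \<in> carrier A \<Longrightarrow> f x \<in> carrier B"
  by (auto simp: alg_hom_def ring_hom_closed)

lemma alg_hom_add:
  "alg_hom R A B f \<Longrightarrow> x \<in> carrier A \<Longrightarrow> y \<in> carrier A \<Longrightarrow> f (x \<oplus>\<^bsub>A\<^esub> y) = f x \<oplus>\<^bsub>B\<^esub> f y"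
  by (auto simp: alg_hom_def ring_hom_add)

lemma alg_hom_mult:
  "alg_hom R A B f \<Longrightarrow> x \<in> carrier A \<Longrightarrow> y \<in> carrier A \<Longrightarrow> f (x \<otimes>\<^bsub>A\<^esub> y) = f x \<otimes>\<^bsub>B\<^esub> f y"
  by (auto simp: alg_hom_def ring_hom_mult)

lemma alg_hom_one: "alg_hom R A B f \<Longrightarrow> f \<one>\<^bsub>A\<^esub> = \<one>\<^bsub>B\<^esub>"
  by (auto simp: alg_hom_def ring_hom_one)

lemma alg_hom_rmap: "alg_hom R A B f \<Longrightarrow> r \<in> carrier R \<Longrightarrow> f (rmap A r) = rmap B r"
  by (auto simp: alg_hom_def)

lemma alg_hom_ring_hom_cring:
  "is_alg R A \<Longrightarrow> is_alg R B \<Longrightarrow> alg_hom R A B f \<Longrightarrow> ring_hom_cring A B f"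
  by (simp add: ring_hom_cring_def ring_hom_cring_axioms_def is_alg_def alg_hom_def)

lemma alg_hom_zero: "is_alg R A \<Longrightarrow> is_alg R B \<Longrightarrow> alg_hom R A B f \<Longrightarrow> f \<zero>\<^bsub>A\<^esub> = \<zero>\<^bsub>B\<^esub>"
  using ring_hom_cring.hom_zero[OF alg_hom_ring_hom_cring] .

lemma alg_hom_neg:
  "is_alg R A \<Longrightarrow> is_alg R B \<Longrightarrow> alg_hom R A B f \<Longrightarrow> x \<in> carrier A \<Longrightarrow> f (\<ominus>\<^bsub>A\<^esub> x) = \<ominus>\<^bsub>B\<^esub> f x"
  using ring_hom_cring.hom_a_inv[OF alg_hom_ring_hom_cring] .

lemma alg_hom_comp: "alg_hom R A B f \<Longrightarrow> alg_hom R B C g \<Longrightarrow> alg_hom R A C (\<lambda>x. g (f x))"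
  by (auto simp: alg_hom_def ring_hom_closed dest: ring_hom_trans simp: comp_def)

lemma alg_hom_id: "alg_hom R A A (\<lambda>x. x)"
  by (auto simp: alg_hom_def intro!: ring_hom_memI)

definition derivation :: "'r ring \<Rightarrow> ('a, 'r) ralg \<Rightarrow> ('c, 'r) ralg \<Rightarrow> ('a \<Rightarrow> 'c) \<Rightarrow> ('a \<Rightarrow> 'c) \<Rightarrow> bool" where
  "derivation R B C g \<delta> \<longleftrightarrow> (\<forall>x\<in>carrier B. \<delta> x \<in> carrier C)
    \<and> (\<forall>x\<in>carrier B. \<forall>y\<in>carrier B. \<delta> (x \<oplus>\<^bsub>B\<^esub> y) = \<delta> x \<oplus>\<^bsub>C\<^esub> \<delta> y
         \<and> \<delta> (x \<otimes>\<^bsub>B\<^esub> y) = g x \<otimes>\<^bsub>C\<^esub> \<delta> y \<oplus>\<^bsub>C\<^esub> g y \<otimes>\<^bsub>C\<^esub> \<delta> x)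
    \<and> (\<forall>r\<in>carrier R. \<delta> (rmap B r) = \<zero>\<^bsub>C\<^esub>)"

lemma derivationI:
  assumes "\<And>x. x \<in> carrier B \<Longrightarrow> \<delta> x \<in> carrier C"
    "\<And>x y. x \<in> carrier B \<Longrightarrow> y \<in> carrier B \<Longrightarrow> \<delta> (x \<oplus>\<^bsub>B\<^esub> y) = \<delta> x \<oplus>\<^bsub>C\<^esub> \<delta> y"
    "\<And>x y. x \<in> carrier B \<Longrightarrow> y \<in> carrier B \<Longrightarrow> \<delta> (x \<otimes>\<^bsub>B\<^esub> y) = g x \<otimes>\<^bsub>C\<^esub> \<delta> y \<oplus>\<^bsub>C\<^esub> g y \<otimes>\<^bsub>C\<^esub> \<delta> x"
    "\<And>r. r \<in> carrier R \<Longrightarrow> \<delta> (rmap B r) = \<zero>\<^bsub>C\<^esub>"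
  shows "derivation R B C g \<delta>"
  using assms by (simp add: derivation_def)

lemma
  assumes "derivation R B C g \<delta>"
  shows derivation_closed: "x \<in> carrier B \<Longrightarrow> \<delta> x \<in> carrier C"
    and derivation_add: "x \<in> carrier B \<Longrightarrow> y \<in> carrier B \<Longrightarrow> \<delta> (x \<oplus>\<^bsub>B\<^esub> y) = \<delta> x \<oplus>\<^bsub>C\<^esub> \<delta> y"
    and derivation_mult: "x \<in> carrier B \<Longrightarrow> y \<in> carrier B \<Longrightarrow>
      \<delta> (x \<otimes>\<^bsub>B\<^esub> y) = g x \<otimes>\<^bsub>C\<^esub> \<delta> y \<oplus>\<^bsub>C\<^esub> g y \<otimes>\<^bsub>C\<^esub> \<delta> x"
    and derivation_rmap: "r \<in> carrier R \<Longrightarrow> \<delta> (rmap B r) = \<zero>\<^bsub>C\<^esub>"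
  using assms by (simp_all add: derivation_def)

lemma derivation_zero:
  assumes "cring R" "is_alg R B" "derivation R B C g \<delta>"
  shows "\<delta> \<zero>\<^bsub>B\<^esub> = \<zero>\<^bsub>C\<^esub>"
  using derivation_rmap[OF assms(3), of "\<zero>\<^bsub>R\<^esub>"] is_alg_zero[OF assms(1,2)] assms(1)
  by (simp add: cring.axioms(1) ring.ring_simprules(2))

lemma derivation_neg:
  assumes "cring R" "is_alg R B" "is_alg R C" "derivation R B C g \<delta>" "x \<in> carrier B"
  shows "\<delta> (\<ominus>\<^bsub>B\<^esub> x) = \<ominus>\<^bsub>C\<^esub> \<delta> x"
proof -
  interpret B: cring B using is_algD[OF assms(2)] by simp
  interpret C: cring C using is_algD[OF assms(3)] by simp
  have "\<delta> (\<ominus>\<^bsub>B\<^esub> x) \<oplus>\<^bsub>C\<^esub> \<delta> x = \<delta> (\<ominus>\<^bsub>B\<^esub> x \<oplus>\<^bsub>B\<^esub> x)"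
    using derivation_add[OF assms(4)] assms(5) by simp
  also have "\<dots> = \<zero>\<^bsub>C\<^esub>"
    using assms(5) derivation_zero[OF assms(1,2,4)] by (simp add: B.l_neg)
  finally show ?thesis
    using C.minus_equality derivation_closed[OF assms(4)] assms(5) by (metis B.a_inv_closed)
qed

lemma derivation_comp_hom:
  "derivation R B C g \<delta> \<Longrightarrow> alg_hom R A B h \<Longrightarrow> derivation R A C (\<lambda>x. g (h x)) (\<lambda>x. \<delta> (h x))"
  by (auto intro!: derivationI simp: derivation_closed alg_hom_closed alg_hom_add alg_hom_mult
      alg_hom_rmap derivation_add derivation_mult derivation_rmap)

lemma hom_comp_derivation:
  assumes "derivation R B C g \<delta>" "alg_hom R C D k" "is_alg R C" "is_alg R D"
    and "\<And>x. x \<in> carrier B \<Longrightarrow> g x \<in> carrier C"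
  shows "derivation R B D (\<lambda>x. k (g x)) (\<lambda>x. k (\<delta> x))"
  using assms
  by (auto intro!: derivationI simp: derivation_closed alg_hom_closed alg_hom_add alg_hom_mult
      alg_hom_zero derivation_add derivation_mult derivation_rmap is_alg_def cring.cring_simprules)

lemma derivation_zero_map:
  "is_alg R C \<Longrightarrow> (\<And>x. x \<in> carrier B \<Longrightarrow> g x \<in> carrier C) \<Longrightarrow> derivation R B C g (\<lambda>x. \<zero>\<^bsub>C\<^esub>)"
  by (auto intro!: derivationI simp: is_alg_def cring.cring_simprules)

lemma derivation_cong:
  "derivation R B C g \<delta> \<Longrightarrow> (\<And>x. x \<in> carrier B \<Longrightarrow> g x = g' x) \<Longrightarrow> derivation R B C g' \<delta>"
  by (simp add: derivation_def)

lemma the_map_eq: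
  assumes "alg_hom R A B f" "f \<in> extensional (carrier A)" "P f"
    and "\<And>g x. alg_hom R A B g \<Longrightarrow> P g \<Longrightarrow> x \<in> carrier A \<Longrightarrow> g x = f x"
  shows "the_map R A B P = f"
  unfolding the_map_def
proof (rule the_equality)
  fix g assume "alg_hom R A B g \<and> g \<in> extensional (carrier A) \<and> P g"
  then show "g = f" using assms(2,4) by (auto intro: extensionalityI)
qed (use assms in simp)

section \<open>Evaluating expressions\<close>

text \<open>Constants outside \<open>carrier R\<close> evaluate to zero, so that every expression evaluates into
  \<open>carrier C\<close>; this is needed because the congruence \<open>peq\<close> relates arbitrary expressions.\<close>

fun eval_pexpr :: "'r ring \<Rightarrow> ('c, 'r) ralg \<Rightarrow> ('x \<Rightarrow> 'c) \<Rightarrow> ('r, 'x) pexpr \<Rightarrow> 'c" where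
  "eval_pexpr R C \<phi> (Var x) = \<phi> x"
| "eval_pexpr R C \<phi> (Const r) = (if r \<in> carrier R then rmap C r else \<zero>\<^bsub>C\<^esub>)"
| "eval_pexpr R C \<phi> (Add a b) = eval_pexpr R C \<phi> a \<oplus>\<^bsub>C\<^esub> eval_pexpr R C \<phi> b"
| "eval_pexpr R C \<phi> (Mul a b) = eval_pexpr R C \<phi> a \<otimes>\<^bsub>C\<^esub> eval_pexpr R C \<phi> b"
| "eval_pexpr R C \<phi> (Neg a) = \<ominus>\<^bsub>C\<^esub> eval_pexpr R C \<phi> a"

fun deriv_pexpr :: "'r ring \<Rightarrow> ('c, 'r) ralg \<Rightarrow> ('x \<Rightarrow> 'c) \<Rightarrow> ('x \<Rightarrow> 'c) \<Rightarrow> ('r, 'x) pexpr \<Rightarrow> 'c" where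
  "deriv_pexpr R C \<phi> \<psi> (Var x) = \<psi> x"
| "deriv_pexpr R C \<phi> \<psi> (Const r) = \<zero>\<^bsub>C\<^esub>"
| "deriv_pexpr R C \<phi> \<psi> (Add a b) = deriv_pexpr R C \<phi> \<psi> a \<oplus>\<^bsub>C\<^esub> deriv_pexpr R C \<phi> \<psi> b"
| "deriv_pexpr R C \<phi> \<psi> (Mul a b) =
     eval_pexpr R C \<phi> a \<otimes>\<^bsub>C\<^esub> deriv_pexpr R C \<phi> \<psi> b \<oplus>\<^bsub>C\<^esub> eval_pexpr R C \<phi> b \<otimes>\<^bsub>C\<^esub> deriv_pexpr R C \<phi> \<psi> a"
| "deriv_pexpr R C \<phi> \<psi> (Neg a) = \<ominus>\<^bsub>C\<^esub> deriv_pexpr R C \<phi> \<psi> a"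

lemma eval_pexpr_closed:
  assumes "is_alg R C" "\<And>x. \<phi> x \<in> carrier C"
  shows "eval_pexpr R C \<phi> e \<in> carrier C"
proof -
  interpret C: cring C using is_algD[OF assms(1)] by simp
  show ?thesis
    by (induction e) (auto simp: assms(2) is_alg_rmap_closed[OF assms(1)])
qed

lemma deriv_pexpr_closed:
  assumes "is_alg R C" "\<And>x. \<phi> x \<in> carrier C" "\<And>x. \<psi> x \<in> carrier C"
  shows "deriv_pexpr R C \<phi> \<psi> e \<in> carrier C"
proof -
  interpret C: cring C using is_algD[OF assms(1)] by simp
  show ?thesis
    by (induction e) (auto simp: assms eval_pexpr_closed[OF assms(1,2)])
qed

lemma eval_pexpr_cong:
  "(\<And>x. x \<in> pvars e \<Longrightarrow> \<phi> x = \<phi>' x) \<Longrightarrow> eval_pexpr R C \<phi> e = eval_pexpr R C \<phi>' e"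
  by (induction e) auto

lemma deriv_pexpr_cong:
  "(\<And>x. x \<in> pvars e \<Longrightarrow> \<phi> x = \<phi>' x \<and> \<psi> x = \<psi>' x)
    \<Longrightarrow> deriv_pexpr R C \<phi> \<psi> e = deriv_pexpr R C \<phi>' \<psi>' e"
proof (induction e)
  case (Mul a b)
  then have "eval_pexpr R C \<phi> a = eval_pexpr R C \<phi>' a" "eval_pexpr R C \<phi> b = eval_pexpr R C \<phi>' b"
    by (auto intro: eval_pexpr_cong)
  with Mul show ?case by simp
qed auto

lemma peq_eval_pexpr:
  assumes "peq R Rel a b" "cring R" "is_alg R C" "\<And>x. \<phi> x \<in> carrier C"
    and rel: "\<And>p q. (p, q) \<in> Rel \<Longrightarrow> eval_pexpr R C \<phi> p = eval_pexpr R C \<phi> q"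
  shows "eval_pexpr R C \<phi> a = eval_pexpr R C \<phi> b"
proof -
  interpret R: cring R by fact
  interpret C: cring C using is_algD[OF assms(3)] by simp
  interpret h: ring_hom_cring R C "rmap C"
    using is_algD[OF assms(3)] by unfold_locales simp_all
  have [simp]: "eval_pexpr R C \<phi> e \<in> carrier C" for e
    by (rule eval_pexpr_closed[OF assms(3,4)])
  show ?thesis
    using assms(1)
    by (induction rule: peq.induct)
       (simp_all add: rel C.a_ac C.m_ac C.l_neg C.r_neg C.r_distr)
qed

lemma peq_deriv_pexpr:
  assumes "peq R Rel a b" "cring R" "is_alg R C" "\<And>x. \<phi> x \<in> carrier C" "\<And>x. \<psi> x \<in> carrier C"
    and eval: "\<And>a b. peq R Rel a b \<Longrightarrow> eval_pexpr R C \<phi> a = eval_pexpr R C \<phi> b"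
    and rel: "\<And>p q. (p, q) \<in> Rel \<Longrightarrow> deriv_pexpr R C \<phi> \<psi> p = deriv_pexpr R C \<phi> \<psi> q"
  shows "deriv_pexpr R C \<phi> \<psi> a = deriv_pexpr R C \<phi> \<psi> b"
proof -
  interpret R: cring R by fact
  interpret C: cring C using is_algD[OF assms(3)] by simp
  have [simp]: "eval_pexpr R C \<phi> e \<in> carrier C" "deriv_pexpr R C \<phi> \<psi> e \<in> carrier C" for e
    by (rule eval_pexpr_closed[OF assms(3,4)], rule deriv_pexpr_closed[OF assms(3,4,5)])
  have [simp]: "r \<in> carrier R \<Longrightarrow> rmap C r \<in> carrier C" for r
    by (rule is_alg_rmap_closed[OF assms(3)])
  show ?thesis
    using assms(1)
    by (induction rule: peq.induct)
       (simp_all add: rel eval is_alg_one[OF assms(3)] C.a_ac C.m_ac C.l_neg C.r_neg C.r_distr C.l_distr)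
qed

section \<open>Presented algebras\<close>

lemma pwf_simps [simp]:
  "pwf R G (Var x) \<longleftrightarrow> x \<in> G"
  "pwf R G (Const r) \<longleftrightarrow> r \<in> carrier R"
  "pwf R G (Add a b) \<longleftrightarrow> pwf R G a \<and> pwf R G b"
  "pwf R G (Mul a b) \<longleftrightarrow> pwf R G a \<and> pwf R G b"
  "pwf R G (Neg a) \<longleftrightarrow> pwf R G a"
  by (auto simp: pwf_def)

lemma pclass_refl: "pwf R G e \<Longrightarrow> e \<in> pclass R G Rel e"
  by (simp add: pclass_def peq.refl)

lemma pclass_eq_iff:
  assumes "pwf R G a" "pwf R G b"
  shows "pclass R G Rel a = pclass R G Rel b \<longleftrightarrow> peq R Rel a b"
proof
  assume "pclass R G Rel a = pclass R G Rel b"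
  then have "b \<in> pclass R G Rel a" using pclass_refl[OF assms(2)] by simp
  then show "peq R Rel a b" by (simp add: pclass_def)
next
  assume "peq R Rel a b"
  then show "pclass R G Rel a = pclass R G Rel b"
    unfolding pclass_def by (auto intro: peq.trans peq.sym)
qed

lemma pclass_rel:
  "(a, b) \<in> Rel \<Longrightarrow> pwf R G a \<Longrightarrow> pwf R G b \<Longrightarrow> pclass R G Rel a = pclass R G Rel b"
  by (simp add: pclass_eq_iff peq.rel)

lemma prep_pclass:
  assumes "pwf R G e"
  shows "pwf R G (prep (pclass R G Rel e))" "peq R Rel e (prep (pclass R G Rel e))"
proof -
  have "prep (pclass R G Rel e) \<in> pclass R G Rel e"
    unfolding prep_def by (rule someI[of _ e]) (rule pclass_refl[OF assms])
  then show "pwf R G (prep (pclass R G Rel e))" "peq R Rel e (prep (pclass R G Rel e))"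
    by (auto simp: pclass_def)
qed

lemma pres_carrierE:
  assumes "X \<in> carrier (pres R G Rel)"
  obtains e where "pwf R G e" "X = pclass R G Rel e"
  using assms by (auto simp: pres_def)

lemma pclass_in_carrier: "pwf R G e \<Longrightarrow> pclass R G Rel e \<in> carrier (pres R G Rel)"
  by (auto simp: pres_def)

lemma pres_add:
  assumes "pwf R G a" "pwf R G b"
  shows "pclass R G Rel a \<oplus>\<^bsub>pres R G Rel\<^esub> pclass R G Rel b = pclass R G Rel (Add a b)"
proof -
  have "pclass R G Rel (Add (prep (pclass R G Rel a)) (prep (pclass R G Rel b))) = pclass R G Rel (Add a b)"
    using prep_pclass[OF assms(1), of Rel] prep_pclass[OF assms(2), of Rel] assms
    by (subst pclass_eq_iff) (auto intro: peq.cong_add peq.sym)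
  then show ?thesis by (simp add: pres_def)
qed

lemma pres_mult:
  assumes "pwf R G a" "pwf R G b"
  shows "pclass R G Rel a \<otimes>\<^bsub>pres R G Rel\<^esub> pclass R G Rel b = pclass R G Rel (Mul a b)"
proof -
  have "pclass R G Rel (Mul (prep (pclass R G Rel a)) (prep (pclass R G Rel b))) = pclass R G Rel (Mul a b)"
    using prep_pclass[OF assms(1), of Rel] prep_pclass[OF assms(2), of Rel] assms
    by (subst pclass_eq_iff) (auto intro: peq.cong_mul peq.sym)
  then show ?thesis by (simp add: pres_def)
qed

lemma pres_zero: "\<zero>\<^bsub>pres R G Rel\<^esub> = pclass R G Rel (Const \<zero>\<^bsub>R\<^esub>)"
  and pres_one: "\<one>\<^bsub>pres R G Rel\<^esub> = pclass R G Rel (Const \<one>\<^bsub>R\<^esub>)"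
  and pres_rmap: "rmap (pres R G Rel) r = pclass R G Rel (Const r)"
  by (simp_all add: pres_def)

lemma pres_cring:
  assumes R: "cring R"
  shows "cring (pres R G Rel)"
proof -
  interpret R: cring R by fact
  let ?P = "pres R G Rel"
  show ?thesis
  proof (rule cringI)
    show "abelian_group ?P"
    proof (rule abelian_groupI)
      fix x assume "x \<in> carrier ?P"
      then obtain e where e: "pwf R G e" "x = pclass R G Rel e" by (rule pres_carrierE)
      show "\<exists>y\<in>carrier ?P. y \<oplus>\<^bsub>?P\<^esub> x = \<zero>\<^bsub>?P\<^esub>"
        by (rule bexI[of _ "pclass R G Rel (Neg e)"])
           (use e in \<open>auto simp: pres_add pres_zero pclass_eq_iff intro: peq.add_neg pclass_in_carrier\<close>)
    qed ((elim pres_carrierE)?, simp add: pclass_in_carrier pres_add pres_zero pclass_eq_iff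
        peq.add_assoc peq.add_comm peq.add_zero)+
  next
    show "comm_monoid ?P"
      by (rule comm_monoidI) ((elim pres_carrierE)?, simp add: pclass_in_carrier pres_mult pres_one
          pclass_eq_iff peq.mul_assoc peq.mul_comm peq.mul_one)+
  next
    fix x y z assume "x \<in> carrier ?P" "y \<in> carrier ?P" "z \<in> carrier ?P"
    then show "(x \<oplus>\<^bsub>?P\<^esub> y) \<otimes>\<^bsub>?P\<^esub> z = x \<otimes>\<^bsub>?P\<^esub> z \<oplus>\<^bsub>?P\<^esub> y \<otimes>\<^bsub>?P\<^esub> z"
      by (elim pres_carrierE) (simp add: pres_mult pres_add pclass_eq_iff
          peq.trans[OF peq.mul_comm peq.trans[OF peq.distrib peq.cong_add[OF peq.mul_comm peq.mul_comm]]])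
  qed
qed

lemma pres_is_alg:
  assumes R: "cring R"
  shows "is_alg R (pres R G Rel)"
proof -
  interpret R: cring R by fact
  have "rmap (pres R G Rel) \<in> ring_hom R (pres R G Rel)"
    by (rule ring_hom_memI)
       (auto simp: pres_rmap pres_add pres_mult pres_one pclass_in_carrier pclass_eq_iff
         intro: peq.sym[OF peq.const_add] peq.sym[OF peq.const_mul])
  then show ?thesis using pres_cring[OF R] by (simp add: is_alg_def)
qed

lemma pres_neg:
  assumes R: "cring R" and "pwf R G a"
  shows "\<ominus>\<^bsub>pres R G Rel\<^esub> pclass R G Rel a = pclass R G Rel (Neg a)"
proof -
  interpret P: cring "pres R G Rel" by (rule pres_cring[OF R])
  interpret R: cring R by fact
  show ?thesis
    by (rule P.minus_equality)
       (use assms in \<open>auto simp: pres_add pres_zero pclass_eq_iff intro: peq.add_neg pclass_in_carrier\<close>)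
qed

lemma gen_eq:
  assumes "x \<in> G"
  shows "gen (pres R G Rel) x = pclass R G Rel (Var x)"
  unfolding gen_def
proof (rule the_equality)
  fix X assume "X \<in> carrier (pres R G Rel) \<and> Var x \<in> X"
  then obtain e where e: "pwf R G e" "X = pclass R G Rel e" "Var x \<in> pclass R G Rel e"
    by (auto elim: pres_carrierE)
  then have "peq R Rel e (Var x)" by (simp add: pclass_def)
  then show "X = pclass R G Rel (Var x)" using e assms by (simp add: pclass_eq_iff)
qed (use assms in \<open>auto intro: pclass_in_carrier pclass_refl\<close>)

lemma gen_in_carrier: "x \<in> G \<Longrightarrow> gen (pres R G Rel) x \<in> carrier (pres R G Rel)"
  by (simp add: gen_eq pclass_in_carrier)

lemma pres_induct [consumes 2, case_names gen rmap add mult neg]: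
  assumes R: "cring R" and X: "X \<in> carrier (pres R G Rel)"
    and gen: "\<And>x. x \<in> G \<Longrightarrow> Q (gen (pres R G Rel) x)"
    and rmap: "\<And>r. r \<in> carrier R \<Longrightarrow> Q (rmap (pres R G Rel) r)"
    and add: "\<And>X Y. X \<in> carrier (pres R G Rel) \<Longrightarrow> Y \<in> carrier (pres R G Rel) \<Longrightarrow> Q X \<Longrightarrow> Q Y
        \<Longrightarrow> Q (X \<oplus>\<^bsub>pres R G Rel\<^esub> Y)"
    and mult: "\<And>X Y. X \<in> carrier (pres R G Rel) \<Longrightarrow> Y \<in> carrier (pres R G Rel) \<Longrightarrow> Q X \<Longrightarrow> Q Y
        \<Longrightarrow> Q (X \<otimes>\<^bsub>pres R G Rel\<^esub> Y)"
    and neg: "\<And>X. X \<in> carrier (pres R G Rel) \<Longrightarrow> Q X \<Longrightarrow> Q (\<ominus>\<^bsub>pres R G Rel\<^esub> X)"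
  shows "Q X"
proof -
  obtain e where e: "pwf R G e" "X = pclass R G Rel e" using X by (rule pres_carrierE)
  have "Q (pclass R G Rel e)" using e(1)
  proof (induction e)
    case (Var x) then show ?case using gen[of x] by (simp add: gen_eq)
  next
    case (Const r) then show ?case using rmap[of r] by (simp add: pres_rmap)
  next
    case (Add a b) then show ?case using add[of "pclass R G Rel a" "pclass R G Rel b"]
      by (simp add: pres_add pclass_in_carrier)
  next
    case (Mul a b) then show ?case using mult[of "pclass R G Rel a" "pclass R G Rel b"]
      by (simp add: pres_mult pclass_in_carrier)
  next
    case (Neg a) then show ?case using neg[of "pclass R G Rel a"]
      by (simp add: pres_neg[OF R] pclass_in_carrier)
  qed
  then show ?thesis using e by simp
qed

lemma eval_pexpr_hom:
  assumes R: "cring R" and C: "is_alg R C" and g: "alg_hom R (pres R G Rel) C g" and e: "pwf R G e"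
  shows "eval_pexpr R C (\<lambda>x. g (gen (pres R G Rel) x)) e = g (pclass R G Rel e)"
  using e
proof (induction e)
  case (Var x) then show ?case by (simp add: gen_eq)
next
  case (Const r) then show ?case using g by (simp add: pres_rmap[symmetric] alg_hom_rmap)
next
  case (Add a b) then show ?case
    using g by (simp add: alg_hom_add pclass_in_carrier pres_add[symmetric])
next
  case (Mul a b) then show ?case
    using g by (simp add: alg_hom_mult pclass_in_carrier pres_mult[symmetric])
next
  case (Neg a) then show ?case
    using g alg_hom_neg[OF pres_is_alg[OF R] C g] by (simp add: pclass_in_carrier pres_neg[OF R, symmetric])
qed

lemma gen_relation:
  assumes R: "cring R" and "(p, q) \<in> Rel" "pwf R G p" "pwf R G q"
  shows "eval_pexpr R (pres R G Rel) (gen (pres R G Rel)) p = eval_pexpr R (pres R G Rel) (gen (pres R G Rel)) q"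
  using eval_pexpr_hom[OF R pres_is_alg[OF R] alg_hom_id, where e=p]
    eval_pexpr_hom[OF R pres_is_alg[OF R] alg_hom_id, where e=q]
    pclass_rel[OF assms(2-4)] assms(3,4) by simp

lemma pres_hom_eq:
  assumes R: "cring R" and C: "is_alg R C"
    and f1: "alg_hom R (pres R G Rel) C f1" and f2: "alg_hom R (pres R G Rel) C f2"
    and eq: "\<And>x. x \<in> G \<Longrightarrow> f1 (gen (pres R G Rel) x) = f2 (gen (pres R G Rel) x)"
    and X: "X \<in> carrier (pres R G Rel)"
  shows "f1 X = f2 X"
  using R X
proof (induction rule: pres_induct)
  case (neg X) then show ?case
    using alg_hom_neg[OF pres_is_alg[OF R] C f1] alg_hom_neg[OF pres_is_alg[OF R] C f2] by simp
qed (use eq f1 f2 in \<open>simp_all add: alg_hom_rmap alg_hom_add alg_hom_mult\<close>)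

lemma pres_deriv_eq:
  assumes R: "cring R" and C: "is_alg R C"
    and d1: "derivation R (pres R G Rel) C g d1" and d2: "derivation R (pres R G Rel) C g d2"
    and eq: "\<And>x. x \<in> G \<Longrightarrow> d1 (gen (pres R G Rel) x) = d2 (gen (pres R G Rel) x)"
    and X: "X \<in> carrier (pres R G Rel)"
  shows "d1 X = d2 X"
  using R X
proof (induction rule: pres_induct)
  case (neg X) then show ?case
    using derivation_neg[OF R pres_is_alg[OF R] C d1] derivation_neg[OF R pres_is_alg[OF R] C d2] by simp
qed (use eq d1 d2 in \<open>simp_all add: derivation_rmap derivation_add derivation_mult\<close>)

lemma pres_fun:
  assumes "\<And>a b. peq R Rel a b \<Longrightarrow> \<Phi> a = \<Phi> b"
  obtains f where "f \<in> extensional (carrier (pres R G Rel))"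
    "\<forall>e. pwf R G e \<longrightarrow> f (pclass R G Rel e) = \<Phi> e"
proof -
  let ?f = "\<lambda>X. if X \<in> carrier (pres R G Rel) then \<Phi> (prep X) else undefined"
  have "?f (pclass R G Rel e) = \<Phi> e" if "pwf R G e" for e
    using assms[OF prep_pclass(2)[OF that]] that by (simp add: pclass_in_carrier)
  then show ?thesis by (intro that[of ?f]) (auto simp: extensional_def)
qed

lemma pres_univ:
  assumes P: "P = pres R G Rel" and R: "cring R" and C: "is_alg R C"
    and wf: "\<And>p q. (p, q) \<in> Rel \<Longrightarrow> pwf R G p \<and> pwf R G q"
    and \<phi>: "\<And>x. x \<in> G \<Longrightarrow> \<phi> x \<in> carrier C"
    and rel: "\<And>p q. (p, q) \<in> Rel \<Longrightarrow> eval_pexpr R C \<phi> p = eval_pexpr R C \<phi> q"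
  obtains f where "alg_hom R P C f" "f \<in> extensional (carrier P)"
    "\<forall>x\<in>G. f (gen P x) = \<phi> x"
proof -
  interpret R: cring R by fact
  interpret C: cring C using is_algD[OF C] by simp
  let ?P = "pres R G Rel"
  define \<phi>' where "\<phi>' x = (if x \<in> G then \<phi> x else \<zero>\<^bsub>C\<^esub>)" for x
  have \<phi>'_closed: "\<phi>' x \<in> carrier C" for x
    using \<phi> by (simp add: \<phi>'_def)
  have eval_\<phi>': "eval_pexpr R C \<phi>' e = eval_pexpr R C \<phi> e" if "pwf R G e" for e
    using that by (intro eval_pexpr_cong) (auto simp: \<phi>'_def pwf_def)
  have eval_closed: "eval_pexpr R C \<phi> e \<in> carrier C" if "pwf R G e" for e
    using eval_\<phi>'[OF that] eval_pexpr_closed[OF C, where \<phi>="\<phi>'" and e=e] \<phi>'_closed by simp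
  have "eval_pexpr R C \<phi>' a = eval_pexpr R C \<phi>' b" if "peq R Rel a b" for a b
  proof (rule peq_eval_pexpr[OF that R C \<phi>'_closed])
    fix p q assume pq: "(p, q) \<in> Rel"
    then show "eval_pexpr R C \<phi>' p = eval_pexpr R C \<phi>' q"
      using wf[OF pq] rel[OF pq] by (simp add: eval_\<phi>')
  qed
  then obtain f where f: "f \<in> extensional (carrier ?P)"
    "\<forall>e. pwf R G e \<longrightarrow> f (pclass R G Rel e) = eval_pexpr R C \<phi>' e"
    by (rule pres_fun)
  have f_pclass: "f (pclass R G Rel e) = eval_pexpr R C \<phi> e" if "pwf R G e" for e
    using f(2) eval_\<phi>' that by simp
  have "alg_hom R ?P C f"
    unfolding alg_hom_def
  proof (intro conjI ballI)
    show "f \<in> ring_hom ?P C"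
      by (rule ring_hom_memI)
         (auto elim!: pres_carrierE simp: f_pclass pres_add pres_mult pres_one
           eval_closed is_alg_one[OF C])
  qed (simp add: pres_rmap f_pclass)
  moreover have "f (gen ?P x) = \<phi> x" if "x \<in> G" for x
    using that by (simp add: gen_eq f_pclass)
  ultimately show ?thesis using that P f(1) by blast
qed

lemma pres_deriv:
  assumes P: "P = pres R G Rel" and R: "cring R" and C: "is_alg R C"
    and wf: "\<And>p q. (p, q) \<in> Rel \<Longrightarrow> pwf R G p \<and> pwf R G q"
    and g: "alg_hom R P C g"
    and \<psi>: "\<And>x. x \<in> G \<Longrightarrow> \<psi> x \<in> carrier C"
    and rel: "\<And>p q. (p, q) \<in> Rel \<Longrightarrow>
        deriv_pexpr R C (\<lambda>x. g (gen P x)) \<psi> p = deriv_pexpr R C (\<lambda>x. g (gen P x)) \<psi> q"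
  obtains \<delta> where "derivation R P C g \<delta>" "\<forall>x\<in>G. \<delta> (gen P x) = \<psi> x"
proof -
  interpret C: cring C using is_algD[OF C] by simp
  let ?P = "pres R G Rel"
  note g = g[unfolded P] and rel = rel[unfolded P]
  define \<phi>' where "\<phi>' x = (if x \<in> G then g (gen ?P x) else \<zero>\<^bsub>C\<^esub>)" for x
  define \<psi>' where "\<psi>' x = (if x \<in> G then \<psi> x else \<zero>\<^bsub>C\<^esub>)" for x
  have closed: "\<phi>' x \<in> carrier C" "\<psi>' x \<in> carrier C" for x
    using \<psi> by (auto simp: \<phi>'_def \<psi>'_def alg_hom_closed[OF g] gen_in_carrier)
  have eval_\<phi>': "eval_pexpr R C \<phi>' e = g (pclass R G Rel e)" if "pwf R G e" for e
    using that eval_pexpr_hom[OF R C g that] by (subst eval_pexpr_cong) (auto simp: \<phi>'_def pwf_def)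
  have deriv_\<phi>'\<psi>': "deriv_pexpr R C \<phi>' \<psi>' e = deriv_pexpr R C (\<lambda>x. g (gen ?P x)) \<psi> e"
    if "pwf R G e" for e
    using that by (intro deriv_pexpr_cong) (auto simp: \<phi>'_def \<psi>'_def pwf_def)
  have eval: "eval_pexpr R C \<phi>' a = eval_pexpr R C \<phi>' b" if "peq R Rel a b" for a b
    using that R C closed(1)
  proof (rule peq_eval_pexpr)
    fix p q assume pq: "(p, q) \<in> Rel"
    then show "eval_pexpr R C \<phi>' p = eval_pexpr R C \<phi>' q"
      using wf[OF pq] pclass_rel[OF pq] by (simp add: eval_\<phi>')
  qed
  have "deriv_pexpr R C \<phi>' \<psi>' a = deriv_pexpr R C \<phi>' \<psi>' b" if "peq R Rel a b" for a b
  proof (rule peq_deriv_pexpr[OF that R C closed eval])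
    fix p q assume pq: "(p, q) \<in> Rel"
    then show "deriv_pexpr R C \<phi>' \<psi>' p = deriv_pexpr R C \<phi>' \<psi>' q"
      using wf[OF pq] rel[OF pq] by (simp add: deriv_\<phi>'\<psi>')
  qed
  then obtain \<delta> where "\<forall>e. pwf R G e \<longrightarrow> \<delta> (pclass R G Rel e) = deriv_pexpr R C \<phi>' \<psi>' e"
    by (rule pres_fun)
  then have \<delta>_pclass: "\<delta> (pclass R G Rel e) = deriv_pexpr R C \<phi>' \<psi>' e" if "pwf R G e" for e
    using that by simp
  have "derivation R ?P C g \<delta>"
  proof (rule derivationI)
    fix x assume "x \<in> carrier ?P" then show "\<delta> x \<in> carrier C"
      by (auto elim!: pres_carrierE simp: \<delta>_pclass deriv_pexpr_closed[OF C closed])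
  next
    fix x y assume "x \<in> carrier ?P" "y \<in> carrier ?P"
    then show "\<delta> (x \<oplus>\<^bsub>?P\<^esub> y) = \<delta> x \<oplus>\<^bsub>C\<^esub> \<delta> y"
      and "\<delta> (x \<otimes>\<^bsub>?P\<^esub> y) = g x \<otimes>\<^bsub>C\<^esub> \<delta> y \<oplus>\<^bsub>C\<^esub> g y \<otimes>\<^bsub>C\<^esub> \<delta> x"
      by (auto elim!: pres_carrierE simp: \<delta>_pclass pres_add pres_mult eval_\<phi>')
  next
    fix r assume "r \<in> carrier R" then show "\<delta> (rmap ?P r) = \<zero>\<^bsub>C\<^esub>"
      by (simp add: pres_rmap \<delta>_pclass)
  qed
  moreover have "\<delta> (gen ?P x) = \<psi> x" if "x \<in> G" for x
    using that by (simp add: gen_eq \<delta>_pclass \<psi>'_def)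
  ultimately show ?thesis using that P by blast
qed

lemma eval_pexpr_hom_rel:
  assumes "(p, q) \<in> hom_rel R B g" "alg_hom R B C (\<lambda>b. \<phi> (g b))"
  shows "eval_pexpr R C \<phi> p = eval_pexpr R C \<phi> q"
  using assms(1)
  by (auto simp: hom_rel_def alg_hom_add[OF assms(2)] alg_hom_mult[OF assms(2)] alg_hom_rmap[OF assms(2)])

lemma deriv_pexpr_hom_rel:
  assumes "(p, q) \<in> hom_rel R B g" "derivation R B C (\<lambda>b. \<phi> (g b)) (\<lambda>b. \<psi> (g b))"
  shows "deriv_pexpr R C \<phi> \<psi> p = deriv_pexpr R C \<phi> \<psi> q"
  using assms(1)
  by (auto simp: hom_rel_def derivation_add[OF assms(2)] derivation_mult[OF assms(2)]
      derivation_rmap[OF assms(2)])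

lemma hom_rel_wf:
  "is_alg R B \<Longrightarrow> g ` carrier B \<subseteq> G \<Longrightarrow> (p, q) \<in> hom_rel R B g \<Longrightarrow> pwf R G p \<and> pwf R G q"
  by (auto simp: hom_rel_def image_subset_iff is_alg_rmap_closed is_alg_def cring.cring_simprules)

lemma gen_alg_hom:
  assumes R: "cring R" and B: "is_alg R B"
    and rel: "hom_rel R B g \<subseteq> Rel" and G: "g ` carrier B \<subseteq> G"
  shows "alg_hom R B (pres R G Rel) (\<lambda>b. gen (pres R G Rel) (g b))"
proof -
  interpret R: cring R by fact
  let ?P = "pres R G Rel"
  have eq: "eval_pexpr R ?P (gen ?P) p = eval_pexpr R ?P (gen ?P) q" if "(p, q) \<in> hom_rel R B g" for p q
    using that rel hom_rel_wf[OF B G that] by (intro gen_relation[OF R]) auto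
  have rmap: "gen ?P (g (rmap B r)) = rmap ?P r" if "r \<in> carrier R" for r
    using eq[of "Var (g (rmap B r))" "Const r"] that by (auto simp: hom_rel_def)
  show ?thesis
    unfolding alg_hom_def
  proof (intro conjI ballI rmap ring_hom_memI)
    fix x y assume "x \<in> carrier B" "y \<in> carrier B"
    then show "gen ?P (g (x \<otimes>\<^bsub>B\<^esub> y)) = gen ?P (g x) \<otimes>\<^bsub>?P\<^esub> gen ?P (g y)"
      and "gen ?P (g (x \<oplus>\<^bsub>B\<^esub> y)) = gen ?P (g x) \<oplus>\<^bsub>?P\<^esub> gen ?P (g y)"
      using eq[of "Var (g (x \<otimes>\<^bsub>B\<^esub> y))" "Mul (Var (g x)) (Var (g y))"]
        eq[of "Var (g (x \<oplus>\<^bsub>B\<^esub> y))" "Add (Var (g x)) (Var (g y))"]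
      by (auto simp: hom_rel_def)
  next
    show "gen ?P (g \<one>\<^bsub>B\<^esub>) = \<one>\<^bsub>?P\<^esub>"
      using rmap[of "\<one>\<^bsub>R\<^esub>"] is_alg_one[OF B] is_alg_one[OF pres_is_alg[OF R]] by simp
  qed (use G in \<open>auto intro: gen_in_carrier\<close>)
qed

section \<open>Tangent algebras\<close>

lemma Tan_is_alg: "cring R \<Longrightarrow> is_alg R (Tan R B)"
  by (simp add: Tan_def pres_is_alg)

lemma Tan_cring: "cring R \<Longrightarrow> cring (Tan R B)"
  by (simp add: Tan_def pres_cring)

lemma tp_closed: "b \<in> carrier B \<Longrightarrow> tp R B b \<in> carrier (Tan R B)"
  and td_closed: "b \<in> carrier B \<Longrightarrow> td R B b \<in> carrier (Tan R B)"
  by (simp_all add: tp_def td_def Tan_def gen_in_carrier)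

lemma tan_rel_wf:
  assumes "cring R" "is_alg R B" "(p, q) \<in> tan_rel R B"
  shows "pwf R (TP ` carrier B \<union> TD ` carrier B) p \<and> pwf R (TP ` carrier B \<union> TD ` carrier B) q"
proof -
  interpret R: cring R by fact
  interpret B: cring B using is_algD[OF assms(2)] by simp
  show ?thesis
    using assms(3) hom_rel_wf[OF assms(2), of TP "TP ` carrier B \<union> TD ` carrier B" p q]
    by (auto simp: tan_rel_def is_alg_rmap_closed[OF assms(2)])
qed

lemma tan_relation:
  assumes "cring R" "is_alg R B" "(p, q) \<in> tan_rel R B"
  shows "eval_pexpr R (Tan R B) (gen (Tan R B)) p = eval_pexpr R (Tan R B) (gen (Tan R B)) q"
  using gen_relation[OF assms(1,3)] tan_rel_wf[OF assms] by (simp add: Tan_def)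

lemma tp_alg_hom:
  assumes "cring R" "is_alg R B"
  shows "alg_hom R B (Tan R B) (tp R B)"
proof -
  have "alg_hom R B (Tan R B) (\<lambda>b. gen (Tan R B) (TP b))"
    unfolding Tan_def by (rule gen_alg_hom[OF assms]) (auto simp: tan_rel_def)
  then show ?thesis by (simp add: tp_def[abs_def])
qed

lemma td_derivation:
  assumes R: "cring R" and B: "is_alg R B"
  shows "derivation R B (Tan R B) (tp R B) (td R B)"
proof -
  interpret R: cring R by fact
  have rel: "eval_pexpr R (Tan R B) (gen (Tan R B)) (Var (TD b)) = eval_pexpr R (Tan R B) (gen (Tan R B)) q"
    if "(Var (TD b), q) \<in> tan_rel R B" for b q
    by (rule tan_relation[OF R B that])
  show ?thesis
  proof (rule derivationI)
    fix x y assume "x \<in> carrier B" "y \<in> carrier B"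
    then show "td R B (x \<oplus>\<^bsub>B\<^esub> y) = td R B x \<oplus>\<^bsub>Tan R B\<^esub> td R B y"
      and "td R B (x \<otimes>\<^bsub>B\<^esub> y) = tp R B x \<otimes>\<^bsub>Tan R B\<^esub> td R B y \<oplus>\<^bsub>Tan R B\<^esub> tp R B y \<otimes>\<^bsub>Tan R B\<^esub> td R B x"
      using rel[of "x \<oplus>\<^bsub>B\<^esub> y" "Add (Var (TD x)) (Var (TD y))"]
        rel[of "x \<otimes>\<^bsub>B\<^esub> y" "Add (Mul (Var (TP x)) (Var (TD y))) (Mul (Var (TP y)) (Var (TD x)))"]
      by (auto simp: tan_rel_def tp_def td_def)
  next
    fix r assume "r \<in> carrier R"
    then show "td R B (rmap B r) = \<zero>\<^bsub>Tan R B\<^esub>"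
      using rel[of "rmap B r" "Const \<zero>\<^bsub>R\<^esub>"] is_alg_zero[OF R Tan_is_alg[OF R]]
      by (auto simp: tan_rel_def td_def)
  qed (rule td_closed)
qed

lemma tan_hom_eq:
  assumes R: "cring R" and C: "is_alg R C"
    and f1: "alg_hom R (Tan R B) C f1" and f2: "alg_hom R (Tan R B) C f2"
    and eq: "\<And>b. b \<in> carrier B \<Longrightarrow> f1 (tp R B b) = f2 (tp R B b) \<and> f1 (td R B b) = f2 (td R B b)"
    and X: "X \<in> carrier (Tan R B)"
  shows "f1 X = f2 X"
  using pres_hom_eq[OF R C f1[unfolded Tan_def] f2[unfolded Tan_def], of X] eq X
  by (auto simp: tp_def td_def Tan_def)

lemma tan_deriv_eq:
  assumes R: "cring R" and C: "is_alg R C"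
    and d1: "derivation R (Tan R B) C g d1" and d2: "derivation R (Tan R B) C g d2"
    and eq: "\<And>b. b \<in> carrier B \<Longrightarrow> d1 (tp R B b) = d2 (tp R B b) \<and> d1 (td R B b) = d2 (td R B b)"
    and X: "X \<in> carrier (Tan R B)"
  shows "d1 X = d2 X"
  using pres_deriv_eq[OF R C d1[unfolded Tan_def] d2[unfolded Tan_def], of X] eq X
  by (auto simp: tp_def td_def Tan_def)

lemma tan_pres_hom_eq:
  assumes R: "cring R" and C: "is_alg R C" and P: "P = pres R G Rel"
    and F1: "alg_hom R (Tan R P) C F1" and F2: "alg_hom R (Tan R P) C F2"
    and eq: "\<And>x. x \<in> G \<Longrightarrow> F1 (tp R P (gen P x)) = F2 (tp R P (gen P x))
                           \<and> F1 (td R P (gen P x)) = F2 (td R P (gen P x))"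
    and X: "X \<in> carrier (Tan R P)"
  shows "F1 X = F2 X"
proof -
  have P_alg: "is_alg R P" using P pres_is_alg[OF R] by simp
  have h1: "alg_hom R P C (\<lambda>x. F1 (tp R P x))" by (rule alg_hom_comp[OF tp_alg_hom[OF R P_alg] F1])
  have h2: "alg_hom R P C (\<lambda>x. F2 (tp R P x))" by (rule alg_hom_comp[OF tp_alg_hom[OF R P_alg] F2])
  have eq_tp: "F1 (tp R P Y) = F2 (tp R P Y)" if "Y \<in> carrier P" for Y
    using pres_hom_eq[OF R C h1[unfolded P] h2[unfolded P]] eq that P by simp
  have d1: "derivation R P C (\<lambda>x. F1 (tp R P x)) (\<lambda>x. F1 (td R P x))"
    by (rule hom_comp_derivation[OF td_derivation[OF R P_alg] F1 Tan_is_alg[OF R] C tp_closed])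
  have d2: "derivation R P C (\<lambda>x. F1 (tp R P x)) (\<lambda>x. F2 (td R P x))"
    by (rule derivation_cong[OF hom_comp_derivation[OF td_derivation[OF R P_alg] F2 Tan_is_alg[OF R] C tp_closed]])
       (simp_all add: eq_tp)
  have eq_td: "F1 (td R P Y) = F2 (td R P Y)" if "Y \<in> carrier P" for Y
    using pres_deriv_eq[OF R C d1[unfolded P] d2[unfolded P]] eq that P by simp
  show ?thesis by (rule tan_hom_eq[OF R C F1 F2 _ X]) (simp add: eq_tp eq_td)
qed

lemma tan_univ:
  assumes R: "cring R" and B: "is_alg R B" and C: "is_alg R C"
    and g: "alg_hom R B C g" and d: "derivation R B C g \<delta>"
  obtains f where "alg_hom R (Tan R B) C f" "f \<in> extensional (carrier (Tan R B))"
    "\<And>b. b \<in> carrier B \<Longrightarrow> f (tp R B b) = g b" "\<And>b. b \<in> carrier B \<Longrightarrow> f (td R B b) = \<delta> b"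
proof -
  interpret R: cring R by fact
  let ?\<phi> = "\<lambda>x. case x of TP b \<Rightarrow> g b | TD b \<Rightarrow> \<delta> b"
  have rel: "eval_pexpr R C ?\<phi> p = eval_pexpr R C ?\<phi> q" if "(p, q) \<in> tan_rel R B" for p q
    using that eval_pexpr_hom_rel[of p q R B TP C ?\<phi>] g
    by (auto simp: tan_rel_def derivation_add[OF d] derivation_mult[OF d] derivation_rmap[OF d]
        is_alg_zero[OF R C])
  have \<phi>_closed: "?\<phi> x \<in> carrier C" if "x \<in> TP ` carrier B \<union> TD ` carrier B" for x
    using that by (auto simp: alg_hom_closed[OF g] derivation_closed[OF d])
  obtain f where f: "alg_hom R (Tan R B) C f" "f \<in> extensional (carrier (Tan R B))"
    "\<forall>x\<in>TP ` carrier B \<union> TD ` carrier B. f (gen (Tan R B) x) = ?\<phi> x"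
    by (rule pres_univ[OF Tan_def R C tan_rel_wf[OF R B] \<phi>_closed rel])
  show ?thesis by (rule that[OF f(1,2)]) (simp_all add: f(3) tp_def td_def)
qed

lemma
  assumes R: "cring R" and B: "is_alg R B" and C: "is_alg R C"
    and g: "alg_hom R B C g" and d: "derivation R B C g \<delta>"
  shows tmap_on_alg_hom: "alg_hom R (Tan R B) C (tmap_on R B C g \<delta>)"
    and tmap_on_tp: "b \<in> carrier B \<Longrightarrow> tmap_on R B C g \<delta> (tp R B b) = g b"
    and tmap_on_td: "b \<in> carrier B \<Longrightarrow> tmap_on R B C g \<delta> (td R B b) = \<delta> b"
proof -
  obtain f where f: "alg_hom R (Tan R B) C f" "f \<in> extensional (carrier (Tan R B))"
    "\<And>b. b \<in> carrier B \<Longrightarrow> f (tp R B b) = g b" "\<And>b. b \<in> carrier B \<Longrightarrow> f (td R B b) = \<delta> b"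
    using tan_univ[OF assms] by blast
  have "tmap_on R B C g \<delta> = f"
    unfolding tmap_on_def
    by (rule the_map_eq[OF f(1,2)]) (use f(3,4) in \<open>auto intro: tan_hom_eq[OF R C _ f(1)]\<close>)
  then show "alg_hom R (Tan R B) C (tmap_on R B C g \<delta>)"
    and "b \<in> carrier B \<Longrightarrow> tmap_on R B C g \<delta> (tp R B b) = g b"
    and "b \<in> carrier B \<Longrightarrow> tmap_on R B C g \<delta> (td R B b) = \<delta> b"
    using f by auto
qed

lemma
  assumes R: "cring R" and B: "is_alg R B" and C: "is_alg R C" and h: "alg_hom R B C h"
  shows Tmap_alg_hom: "alg_hom R (Tan R B) (Tan R C) (Tmap R B C h)"
    and Tmap_tp: "b \<in> carrier B \<Longrightarrow> Tmap R B C h (tp R B b) = tp R C (h b)"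
    and Tmap_td: "b \<in> carrier B \<Longrightarrow> Tmap R B C h (td R B b) = td R C (h b)"
proof -
  note prems = R B Tan_is_alg[OF R] alg_hom_comp[OF h tp_alg_hom[OF R C]]
    derivation_comp_hom[OF td_derivation[OF R C] h]
  show "alg_hom R (Tan R B) (Tan R C) (Tmap R B C h)"
    and "b \<in> carrier B \<Longrightarrow> Tmap R B C h (tp R B b) = tp R C (h b)"
    and "b \<in> carrier B \<Longrightarrow> Tmap R B C h (td R B b) = td R C (h b)"
    unfolding Tmap_def by (simp_all add: tmap_on_alg_hom[OF prems] tmap_on_tp[OF prems] tmap_on_td[OF prems])
qed

lemma tan2_univ:
  assumes R: "cring R" and B: "is_alg R B" and C: "is_alg R C"
    and f1: "alg_hom R B C f1" and f2: "derivation R B C f1 f2" and f3: "derivation R B C f1 f3"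
    and f4_closed: "\<And>b. b \<in> carrier B \<Longrightarrow> f4 b \<in> carrier C"
    and f4_add: "\<And>b b'. b \<in> carrier B \<Longrightarrow> b' \<in> carrier B \<Longrightarrow> f4 (b \<oplus>\<^bsub>B\<^esub> b') = f4 b \<oplus>\<^bsub>C\<^esub> f4 b'"
    and f4_mult: "\<And>b b'. b \<in> carrier B \<Longrightarrow> b' \<in> carrier B \<Longrightarrow> f4 (b \<otimes>\<^bsub>B\<^esub> b') =
        (f1 b \<otimes>\<^bsub>C\<^esub> f4 b' \<oplus>\<^bsub>C\<^esub> f2 b' \<otimes>\<^bsub>C\<^esub> f3 b) \<oplus>\<^bsub>C\<^esub> (f1 b' \<otimes>\<^bsub>C\<^esub> f4 b \<oplus>\<^bsub>C\<^esub> f2 b \<otimes>\<^bsub>C\<^esub> f3 b')"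
    and f4_rmap: "\<And>r. r \<in> carrier R \<Longrightarrow> f4 (rmap B r) = \<zero>\<^bsub>C\<^esub>"
  obtains F where "alg_hom R (Tan R (Tan R B)) C F" "F \<in> extensional (carrier (Tan R (Tan R B)))"
    "\<And>b. b \<in> carrier B \<Longrightarrow> F (tp R (Tan R B) (tp R B b)) = f1 b"
    "\<And>b. b \<in> carrier B \<Longrightarrow> F (tp R (Tan R B) (td R B b)) = f2 b"
    "\<And>b. b \<in> carrier B \<Longrightarrow> F (td R (Tan R B) (tp R B b)) = f3 b"
    "\<And>b. b \<in> carrier B \<Longrightarrow> F (td R (Tan R B) (td R B b)) = f4 b"
proof -
  interpret R: cring R by fact
  let ?T = "Tan R B" and ?g = "tmap_on R B C f1 f2"
  let ?\<psi> = "\<lambda>x. case x of TP b \<Rightarrow> f3 b | TD b \<Rightarrow> f4 b"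
  note g = tmap_on_alg_hom[OF R B C f1 f2] tmap_on_tp[OF R B C f1 f2] tmap_on_td[OF R B C f1 f2]
  have d3: "derivation R B C (\<lambda>b. ?g (gen ?T (TP b))) f3"
    by (rule derivation_cong[OF f3]) (simp add: g(2)[unfolded tp_def])
  have rel: "deriv_pexpr R C (\<lambda>x. ?g (gen ?T x)) ?\<psi> p = deriv_pexpr R C (\<lambda>x. ?g (gen ?T x)) ?\<psi> q"
    if "(p, q) \<in> tan_rel R B" for p q
    using that deriv_pexpr_hom_rel[of p q R B TP C "\<lambda>x. ?g (gen ?T x)" ?\<psi>] d3
    by (auto simp: tan_rel_def g(2,3)[unfolded tp_def td_def] f4_add f4_mult f4_rmap)
  have \<psi>_closed: "?\<psi> x \<in> carrier C" if "x \<in> TP ` carrier B \<union> TD ` carrier B" for x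
    using that by (auto simp: f4_closed derivation_closed[OF f3])
  obtain \<delta> where \<delta>: "derivation R ?T C ?g \<delta>"
    "\<forall>x\<in>TP ` carrier B \<union> TD ` carrier B. \<delta> (gen ?T x) = ?\<psi> x"
    by (rule pres_deriv[OF Tan_def R C tan_rel_wf[OF R B] g(1) \<psi>_closed rel])
  obtain F where F: "alg_hom R (Tan R ?T) C F" "F \<in> extensional (carrier (Tan R ?T))"
    "\<And>x. x \<in> carrier ?T \<Longrightarrow> F (tp R ?T x) = ?g x" "\<And>x. x \<in> carrier ?T \<Longrightarrow> F (td R ?T x) = \<delta> x"
    using tan_univ[OF R Tan_is_alg[OF R] C g(1) \<delta>(1)] by blast
  have "\<delta> (tp R B b) = f3 b" "\<delta> (td R B b) = f4 b" if "b \<in> carrier B" for b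
    using \<delta>(2) that by (simp_all add: tp_def td_def)
  then show ?thesis
    by (intro that[OF F(1,2)]) (simp_all add: F(3,4) g(2,3) tp_closed td_closed)
qed

lemma
  assumes R: "cring R" and B: "is_alg R B" and C: "is_alg R C"
    and f1: "alg_hom R B C f1" and f2: "derivation R B C f1 f2" and f3: "derivation R B C f1 f3"
    and f4_closed: "\<And>b. b \<in> carrier B \<Longrightarrow> f4 b \<in> carrier C"
    and f4_add: "\<And>b b'. b \<in> carrier B \<Longrightarrow> b' \<in> carrier B \<Longrightarrow> f4 (b \<oplus>\<^bsub>B\<^esub> b') = f4 b \<oplus>\<^bsub>C\<^esub> f4 b'"
    and f4_mult: "\<And>b b'. b \<in> carrier B \<Longrightarrow> b' \<in> carrier B \<Longrightarrow> f4 (b \<otimes>\<^bsub>B\<^esub> b') =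
        (f1 b \<otimes>\<^bsub>C\<^esub> f4 b' \<oplus>\<^bsub>C\<^esub> f2 b' \<otimes>\<^bsub>C\<^esub> f3 b) \<oplus>\<^bsub>C\<^esub> (f1 b' \<otimes>\<^bsub>C\<^esub> f4 b \<oplus>\<^bsub>C\<^esub> f2 b \<otimes>\<^bsub>C\<^esub> f3 b')"
    and f4_rmap: "\<And>r. r \<in> carrier R \<Longrightarrow> f4 (rmap B r) = \<zero>\<^bsub>C\<^esub>"
  shows t2map_on_alg_hom: "alg_hom R (Tan R (Tan R B)) C (t2map_on R B C f1 f2 f3 f4)"
    and t2map_on_tp_tp: "b \<in> carrier B \<Longrightarrow> t2map_on R B C f1 f2 f3 f4 (tp R (Tan R B) (tp R B b)) = f1 b"
    and t2map_on_tp_td: "b \<in> carrier B \<Longrightarrow> t2map_on R B C f1 f2 f3 f4 (tp R (Tan R B) (td R B b)) = f2 b"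
    and t2map_on_td_tp: "b \<in> carrier B \<Longrightarrow> t2map_on R B C f1 f2 f3 f4 (td R (Tan R B) (tp R B b)) = f3 b"
    and t2map_on_td_td: "b \<in> carrier B \<Longrightarrow> t2map_on R B C f1 f2 f3 f4 (td R (Tan R B) (td R B b)) = f4 b"
proof -
  obtain F where F: "alg_hom R (Tan R (Tan R B)) C F" "F \<in> extensional (carrier (Tan R (Tan R B)))"
    "\<And>b. b \<in> carrier B \<Longrightarrow> F (tp R (Tan R B) (tp R B b)) = f1 b"
    "\<And>b. b \<in> carrier B \<Longrightarrow> F (tp R (Tan R B) (td R B b)) = f2 b"
    "\<And>b. b \<in> carrier B \<Longrightarrow> F (td R (Tan R B) (tp R B b)) = f3 b"
    "\<And>b. b \<in> carrier B \<Longrightarrow> F (td R (Tan R B) (td R B b)) = f4 b"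
    using tan2_univ[OF assms] by blast
  have "t2map_on R B C f1 f2 f3 f4 = F"
    unfolding t2map_on_def
  proof (rule the_map_eq[OF F(1,2)])
    fix G x assume G: "alg_hom R (Tan R (Tan R B)) C G"
      "\<forall>b\<in>carrier B. G (tp R (Tan R B) (tp R B b)) = f1 b \<and> G (tp R (Tan R B) (td R B b)) = f2 b
          \<and> G (td R (Tan R B) (tp R B b)) = f3 b \<and> G (td R (Tan R B) (td R B b)) = f4 b"
      and x: "x \<in> carrier (Tan R (Tan R B))"
    show "G x = F x"
      by (rule tan_pres_hom_eq[OF R C Tan_def G(1) F(1) _ x])
         (use F(3-6) G(2) in \<open>auto simp flip: Tan_def tp_def td_def\<close>)
  qed (use F(3-6) in simp)
  then show "alg_hom R (Tan R (Tan R B)) C (t2map_on R B C f1 f2 f3 f4)"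
    and "b \<in> carrier B \<Longrightarrow> t2map_on R B C f1 f2 f3 f4 (tp R (Tan R B) (tp R B b)) = f1 b"
    and "b \<in> carrier B \<Longrightarrow> t2map_on R B C f1 f2 f3 f4 (tp R (Tan R B) (td R B b)) = f2 b"
    and "b \<in> carrier B \<Longrightarrow> t2map_on R B C f1 f2 f3 f4 (td R (Tan R B) (tp R B b)) = f3 b"
    and "b \<in> carrier B \<Longrightarrow> t2map_on R B C f1 f2 f3 f4 (td R (Tan R B) (td R B b)) = f4 b"
    using F by auto
qed

lemma
  assumes R: "cring R" and B: "is_alg R B"
  shows zmap_alg_hom: "alg_hom R (Tan R B) B (zmap R B)"
    and zmap_tp: "b \<in> carrier B \<Longrightarrow> zmap R B (tp R B b) = b"
    and zmap_td: "b \<in> carrier B \<Longrightarrow> zmap R B (td R B b) = \<zero>\<^bsub>B\<^esub>"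
  using tmap_on_alg_hom[OF R B B alg_hom_id derivation_zero_map[OF B]]
    tmap_on_tp[OF R B B alg_hom_id derivation_zero_map[OF B]]
    tmap_on_td[OF R B B alg_hom_id derivation_zero_map[OF B]]
  unfolding zmap_def by auto

lemma
  assumes R: "cring R" and B: "is_alg R B"
  shows lift_alg_hom: "alg_hom R (Tan R (Tan R B)) (Tan R B) (lift R B)"
    and lift_tp_tp: "b \<in> carrier B \<Longrightarrow> lift R B (tp R (Tan R B) (tp R B b)) = tp R B b"
    and lift_tp_td: "b \<in> carrier B \<Longrightarrow> lift R B (tp R (Tan R B) (td R B b)) = \<zero>\<^bsub>Tan R B\<^esub>"
    and lift_td_tp: "b \<in> carrier B \<Longrightarrow> lift R B (td R (Tan R B) (tp R B b)) = \<zero>\<^bsub>Tan R B\<^esub>"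
    and lift_td_td: "b \<in> carrier B \<Longrightarrow> lift R B (td R (Tan R B) (td R B b)) = td R B b"
proof -
  interpret T: cring "Tan R B" by (rule Tan_cring[OF R])
  note d = td_derivation[OF R B]
  have zero: "derivation R B (Tan R B) (tp R B) (\<lambda>b. \<zero>\<^bsub>Tan R B\<^esub>)"
    by (rule derivation_zero_map[OF Tan_is_alg[OF R] tp_closed])
  have mult: "td R B (b \<otimes>\<^bsub>B\<^esub> b') =
      (tp R B b \<otimes>\<^bsub>Tan R B\<^esub> td R B b' \<oplus>\<^bsub>Tan R B\<^esub> \<zero>\<^bsub>Tan R B\<^esub> \<otimes>\<^bsub>Tan R B\<^esub> \<zero>\<^bsub>Tan R B\<^esub>)
      \<oplus>\<^bsub>Tan R B\<^esub> (tp R B b' \<otimes>\<^bsub>Tan R B\<^esub> td R B b \<oplus>\<^bsub>Tan R B\<^esub> \<zero>\<^bsub>Tan R B\<^esub> \<otimes>\<^bsub>Tan R B\<^esub> \<zero>\<^bsub>Tan R B\<^esub>)"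
    if "b \<in> carrier B" "b' \<in> carrier B" for b b'
    using that by (simp add: derivation_mult[OF d] tp_closed td_closed)
  note prems = R B Tan_is_alg[OF R] tp_alg_hom[OF R B] zero zero td_closed derivation_add[OF d] mult
    derivation_rmap[OF d]
  show "alg_hom R (Tan R (Tan R B)) (Tan R B) (lift R B)"
    and "b \<in> carrier B \<Longrightarrow> lift R B (tp R (Tan R B) (tp R B b)) = tp R B b"
    and "b \<in> carrier B \<Longrightarrow> lift R B (tp R (Tan R B) (td R B b)) = \<zero>\<^bsub>Tan R B\<^esub>"
    and "b \<in> carrier B \<Longrightarrow> lift R B (td R (Tan R B) (tp R B b)) = \<zero>\<^bsub>Tan R B\<^esub>"
    and "b \<in> carrier B \<Longrightarrow> lift R B (td R (Tan R B) (td R B b)) = td R B b"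
    unfolding lift_def
    by (simp_all add: t2map_on_alg_hom[OF prems] t2map_on_tp_tp[OF prems] t2map_on_tp_td[OF prems]
        t2map_on_td_tp[OF prems] t2map_on_td_td[OF prems])
qed

lemma
  assumes R: "cring R" and B: "is_alg R B"
  shows zmapT_alg_hom: "alg_hom R (Tan R (Tan R B)) (Tan R B) (zmapT R B)"
    and zmapT_tp: "w \<in> carrier (Tan R B) \<Longrightarrow> zmapT R B (tp R (Tan R B) w) = w"
    and zmapT_td: "w \<in> carrier (Tan R B) \<Longrightarrow> zmapT R B (td R (Tan R B) w) = \<zero>\<^bsub>Tan R B\<^esub>"
proof -
  interpret T: cring "Tan R B" by (rule Tan_cring[OF R])
  note TB = Tan_is_alg[OF R]
  have zero: "derivation R B (Tan R B) (tp R B) (\<lambda>b. \<zero>\<^bsub>Tan R B\<^esub>)"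
    by (rule derivation_zero_map[OF TB tp_closed])
  note prems = R B TB tp_alg_hom[OF R B] td_derivation[OF R B] zero
  have mult: "\<zero>\<^bsub>Tan R B\<^esub> =
      (tp R B b \<otimes>\<^bsub>Tan R B\<^esub> \<zero>\<^bsub>Tan R B\<^esub> \<oplus>\<^bsub>Tan R B\<^esub> td R B b' \<otimes>\<^bsub>Tan R B\<^esub> \<zero>\<^bsub>Tan R B\<^esub>)
      \<oplus>\<^bsub>Tan R B\<^esub> (tp R B b' \<otimes>\<^bsub>Tan R B\<^esub> \<zero>\<^bsub>Tan R B\<^esub> \<oplus>\<^bsub>Tan R B\<^esub> td R B b \<otimes>\<^bsub>Tan R B\<^esub> \<zero>\<^bsub>Tan R B\<^esub>)"
    if "b \<in> carrier B" "b' \<in> carrier B" for b b'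
    using that by (simp add: tp_closed td_closed)
  note t2 = t2map_on_alg_hom[OF prems _ _ mult] t2map_on_tp_tp[OF prems _ _ mult]
    t2map_on_tp_td[OF prems _ _ mult] t2map_on_td_tp[OF prems _ _ mult] t2map_on_td_td[OF prems _ _ mult]
  show hom: "alg_hom R (Tan R (Tan R B)) (Tan R B) (zmapT R B)"
    unfolding zmapT_def by (rule t2(1)) (simp_all add: td_closed)
  have hom_tp: "alg_hom R (Tan R B) (Tan R B) (\<lambda>w. zmapT R B (tp R (Tan R B) w))"
    by (rule alg_hom_comp[OF tp_alg_hom[OF R TB] hom])
  have gens: "zmapT R B (tp R (Tan R B) (tp R B b)) = tp R B b"
    "zmapT R B (tp R (Tan R B) (td R B b)) = td R B b"
    "zmapT R B (td R (Tan R B) (tp R B b)) = \<zero>\<^bsub>Tan R B\<^esub>"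
    "zmapT R B (td R (Tan R B) (td R B b)) = \<zero>\<^bsub>Tan R B\<^esub>" if "b \<in> carrier B" for b
    unfolding zmapT_def using that by (simp_all add: t2)
  show "w \<in> carrier (Tan R B) \<Longrightarrow> zmapT R B (tp R (Tan R B) w) = w"
    by (rule tan_hom_eq[OF R TB hom_tp alg_hom_id]) (simp_all add: gens)
  have "derivation R (Tan R B) (Tan R B) (\<lambda>w. zmapT R B (tp R (Tan R B) w)) (\<lambda>w. zmapT R B (td R (Tan R B) w))"
    by (rule hom_comp_derivation[OF td_derivation[OF R TB] hom Tan_is_alg[OF R] TB tp_closed])
  moreover have "derivation R (Tan R B) (Tan R B) (\<lambda>w. zmapT R B (tp R (Tan R B) w)) (\<lambda>w. \<zero>\<^bsub>Tan R B\<^esub>)"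
    by (rule derivation_zero_map[OF TB alg_hom_closed[OF hom_tp]])
  ultimately show "w \<in> carrier (Tan R B) \<Longrightarrow> zmapT R B (td R (Tan R B) w) = \<zero>\<^bsub>Tan R B\<^esub>"
    by (rule tan_deriv_eq[OF R TB]) (simp_all add: gens)
qed

lemma canflip_td_td:
  assumes R: "cring R" and B: "is_alg R B" and b: "b \<in> carrier B"
  shows "canflip R B (td R (Tan R B) (td R B b)) = td R (Tan R B) (td R B b)"
proof -
  let ?T = "Tan R B" and ?T2 = "Tan R (Tan R B)"
  interpret T2: cring ?T2 by (rule Tan_cring[OF R])
  interpret T: cring ?T by (rule Tan_cring[OF R])
  note TB = Tan_is_alg[OF R]
  note dB = td_derivation[OF R B] and dT = td_derivation[OF R TB]
  have f1: "alg_hom R B ?T2 (\<lambda>b. tp R ?T (tp R B b))"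
    by (rule alg_hom_comp[OF tp_alg_hom[OF R B] tp_alg_hom[OF R TB]])
  have f2: "derivation R B ?T2 (\<lambda>b. tp R ?T (tp R B b)) (\<lambda>b. td R ?T (tp R B b))"
    by (rule derivation_comp_hom[OF dT tp_alg_hom[OF R B]])
  have f3: "derivation R B ?T2 (\<lambda>b. tp R ?T (tp R B b)) (\<lambda>b. tp R ?T (td R B b))"
    by (rule hom_comp_derivation[OF dB tp_alg_hom[OF R TB] TB Tan_is_alg[OF R] tp_closed])
  have add: "td R ?T (td R B (b \<oplus>\<^bsub>B\<^esub> b')) = td R ?T (td R B b) \<oplus>\<^bsub>?T2\<^esub> td R ?T (td R B b')"
    if "b \<in> carrier B" "b' \<in> carrier B" for b b'
    using that by (simp add: derivation_add[OF dB] derivation_add[OF dT] td_closed)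
  have mult: "td R ?T (td R B (b \<otimes>\<^bsub>B\<^esub> b')) =
     tp R ?T (tp R B b) \<otimes>\<^bsub>?T2\<^esub> td R ?T (td R B b') \<oplus>\<^bsub>?T2\<^esub> td R ?T (tp R B b') \<otimes>\<^bsub>?T2\<^esub> tp R ?T (td R B b)
     \<oplus>\<^bsub>?T2\<^esub> (tp R ?T (tp R B b') \<otimes>\<^bsub>?T2\<^esub> td R ?T (td R B b) \<oplus>\<^bsub>?T2\<^esub> td R ?T (tp R B b) \<otimes>\<^bsub>?T2\<^esub> tp R ?T (td R B b'))"
    if "b \<in> carrier B" "b' \<in> carrier B" for b b'
    using that
    by (simp add: derivation_mult[OF dB] derivation_add[OF dT] derivation_mult[OF dT] tp_closed td_closed
        T.m_closed T2.a_ac T2.m_ac)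
  have rmap: "td R ?T (td R B (rmap B r)) = \<zero>\<^bsub>?T2\<^esub>" if "r \<in> carrier R" for r
    using that by (simp add: derivation_rmap[OF dB] derivation_zero[OF R TB dT])
  show ?thesis
    unfolding canflip_def by (rule t2map_on_td_td[OF R B TB f1 f2 f3 _ add mult rmap b]) (simp add: td_closed)
qed

section \<open>Symmetric algebras\<close>

lemma Sym_is_alg: "cring R \<Longrightarrow> is_alg R (Sym R A M)"
  by (simp add: Sym_def pres_is_alg)

lemma sq_closed: "a \<in> carrier A \<Longrightarrow> sq R A M a \<in> carrier (Sym R A M)"
  and sj_closed: "m \<in> carrier M \<Longrightarrow> sj R A M m \<in> carrier (Sym R A M)"
  by (simp_all add: sq_def sj_def Sym_def gen_in_carrier)

lemma sym_rel_wf: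
  assumes A: "is_alg R A" and M: "module A M" and pq: "(p, q) \<in> sym_rel R A M"
  shows "pwf R (SA ` carrier A \<union> SM ` carrier M) p \<and> pwf R (SA ` carrier A \<union> SM ` carrier M) q"
proof -
  interpret M: module A M by fact
  show ?thesis
    using pq hom_rel_wf[OF A, of SA "SA ` carrier A \<union> SM ` carrier M" p q] by (auto simp: sym_rel_def)
qed

lemma sym_relation:
  assumes "cring R" "is_alg R A" "module A M" "(p, q) \<in> sym_rel R A M"
  shows "eval_pexpr R (Sym R A M) (gen (Sym R A M)) p = eval_pexpr R (Sym R A M) (gen (Sym R A M)) q"
  using gen_relation[OF assms(1,4)] sym_rel_wf[OF assms(2-4)] by (simp add: Sym_def)

lemma sq_alg_hom:
  assumes "cring R" "is_alg R A"
  shows "alg_hom R A (Sym R A M) (sq R A M)"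
proof -
  have "alg_hom R A (Sym R A M) (\<lambda>a. gen (Sym R A M) (SA a))"
    unfolding Sym_def by (rule gen_alg_hom[OF assms]) (auto simp: sym_rel_def)
  then show ?thesis by (simp add: sq_def[abs_def])
qed

lemma
  assumes "cring R" "is_alg R A" "module A M"
  shows sj_add: "m \<in> carrier M \<Longrightarrow> m' \<in> carrier M \<Longrightarrow>
      sj R A M (m \<oplus>\<^bsub>M\<^esub> m') = sj R A M m \<oplus>\<^bsub>Sym R A M\<^esub> sj R A M m'"
    and sj_smult: "a \<in> carrier A \<Longrightarrow> m \<in> carrier M \<Longrightarrow>
      sj R A M (a \<odot>\<^bsub>M\<^esub> m) = sq R A M a \<otimes>\<^bsub>Sym R A M\<^esub> sj R A M m"
  using sym_relation[OF assms, of "Var (SM (m \<oplus>\<^bsub>M\<^esub> m'))" "Add (Var (SM m)) (Var (SM m'))"]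
    sym_relation[OF assms, of "Var (SM (a \<odot>\<^bsub>M\<^esub> m))" "Mul (Var (SA a)) (Var (SM m))"]
  by (auto simp: sym_rel_def sq_def sj_def)

lemma sym_univ:
  assumes R: "cring R" and A: "is_alg R A" and M: "module A M" and C: "is_alg R C"
    and g: "alg_hom R A C g" and \<mu>_closed: "\<And>m. m \<in> carrier M \<Longrightarrow> \<mu> m \<in> carrier C"
    and \<mu>_add: "\<And>m m'. m \<in> carrier M \<Longrightarrow> m' \<in> carrier M \<Longrightarrow> \<mu> (m \<oplus>\<^bsub>M\<^esub> m') = \<mu> m \<oplus>\<^bsub>C\<^esub> \<mu> m'"
    and \<mu>_smult: "\<And>a m. a \<in> carrier A \<Longrightarrow> m \<in> carrier M \<Longrightarrow> \<mu> (a \<odot>\<^bsub>M\<^esub> m) = g a \<otimes>\<^bsub>C\<^esub> \<mu> m"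
  obtains f where "alg_hom R (Sym R A M) C f"
    "\<And>a. a \<in> carrier A \<Longrightarrow> f (sq R A M a) = g a" "\<And>m. m \<in> carrier M \<Longrightarrow> f (sj R A M m) = \<mu> m"
proof -
  let ?\<phi> = "\<lambda>x. case x of SA a \<Rightarrow> g a | SM m \<Rightarrow> \<mu> m"
  have rel: "eval_pexpr R C ?\<phi> p = eval_pexpr R C ?\<phi> q" if "(p, q) \<in> sym_rel R A M" for p q
    using that eval_pexpr_hom_rel[of p q R A SA C ?\<phi>] g by (auto simp: sym_rel_def \<mu>_add \<mu>_smult)
  have \<phi>_closed: "?\<phi> x \<in> carrier C" if "x \<in> SA ` carrier A \<union> SM ` carrier M" for x
    using that by (auto simp: alg_hom_closed[OF g] \<mu>_closed)
  obtain f where f: "alg_hom R (Sym R A M) C f"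
    "\<forall>x\<in>SA ` carrier A \<union> SM ` carrier M. f (gen (Sym R A M) x) = ?\<phi> x"
    by (rule pres_univ[OF Sym_def R C sym_rel_wf[OF A M] \<phi>_closed rel])
  show ?thesis by (rule that[OF f(1)]) (simp_all add: f(2) sq_def sj_def)
qed

lemma sym_deriv:
  assumes R: "cring R" and A: "is_alg R A" and M: "module A M" and C: "is_alg R C"
    and g: "alg_hom R (Sym R A M) C g" and d: "derivation R A C (\<lambda>a. g (sq R A M a)) d"
    and \<mu>_closed: "\<And>m. m \<in> carrier M \<Longrightarrow> \<mu> m \<in> carrier C"
    and \<mu>_add: "\<And>m m'. m \<in> carrier M \<Longrightarrow> m' \<in> carrier M \<Longrightarrow> \<mu> (m \<oplus>\<^bsub>M\<^esub> m') = \<mu> m \<oplus>\<^bsub>C\<^esub> \<mu> m'"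
    and \<mu>_smult: "\<And>a m. a \<in> carrier A \<Longrightarrow> m \<in> carrier M \<Longrightarrow>
        \<mu> (a \<odot>\<^bsub>M\<^esub> m) = g (sq R A M a) \<otimes>\<^bsub>C\<^esub> \<mu> m \<oplus>\<^bsub>C\<^esub> g (sj R A M m) \<otimes>\<^bsub>C\<^esub> d a"
  obtains \<delta> where "derivation R (Sym R A M) C g \<delta>"
    "\<And>a. a \<in> carrier A \<Longrightarrow> \<delta> (sq R A M a) = d a" "\<And>m. m \<in> carrier M \<Longrightarrow> \<delta> (sj R A M m) = \<mu> m"
proof -
  let ?S = "Sym R A M"
  let ?\<psi> = "\<lambda>x. case x of SA a \<Rightarrow> d a | SM m \<Rightarrow> \<mu> m"
  have rel: "deriv_pexpr R C (\<lambda>x. g (gen ?S x)) ?\<psi> p = deriv_pexpr R C (\<lambda>x. g (gen ?S x)) ?\<psi> q"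
    if "(p, q) \<in> sym_rel R A M" for p q
    using that deriv_pexpr_hom_rel[of p q R A SA C "\<lambda>x. g (gen ?S x)" ?\<psi>] d
    by (auto simp: sym_rel_def \<mu>_add \<mu>_smult sq_def sj_def)
  have \<psi>_closed: "?\<psi> x \<in> carrier C" if "x \<in> SA ` carrier A \<union> SM ` carrier M" for x
    using that by (auto simp: derivation_closed[OF d] \<mu>_closed)
  obtain \<delta> where \<delta>: "derivation R ?S C g \<delta>"
    "\<forall>x\<in>SA ` carrier A \<union> SM ` carrier M. \<delta> (gen ?S x) = ?\<psi> x"
    by (rule pres_deriv[OF Sym_def R C sym_rel_wf[OF A M] g \<psi>_closed rel])
  show ?thesis by (rule that[OF \<delta>(1)]) (simp_all add: \<delta>(2) sq_def sj_def)
qed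

lemma lam_exists:
  assumes R: "cring R" and A: "is_alg R A" and M: "module A M"
  obtains f where "alg_hom R (Tan R (Sym R A M)) (Sym R A M) f" "f \<in> extensional (carrier (Tan R (Sym R A M)))"
    "\<forall>a\<in>carrier A. f (tp R (Sym R A M) (sq R A M a)) = sq R A M a
                  \<and> f (td R (Sym R A M) (sq R A M a)) = \<zero>\<^bsub>Sym R A M\<^esub>"
    "\<forall>m\<in>carrier M. f (tp R (Sym R A M) (sj R A M m)) = \<zero>\<^bsub>Sym R A M\<^esub>
                  \<and> f (td R (Sym R A M) (sj R A M m)) = sj R A M m"
proof -
  let ?S = "Sym R A M"
  note S = Sym_is_alg[OF R, of A M]
  interpret S: cring ?S using is_algD[OF S] by simp
  interpret M: module A M by fact
  obtain l where l: "alg_hom R ?S ?S l"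
    "\<And>a. a \<in> carrier A \<Longrightarrow> l (sq R A M a) = sq R A M a" "\<And>m. m \<in> carrier M \<Longrightarrow> l (sj R A M m) = \<zero>\<^bsub>?S\<^esub>"
    using sym_univ[OF R A M S sq_alg_hom[OF R A], of "\<lambda>m. \<zero>\<^bsub>?S\<^esub>"] by (auto simp: sq_closed)
  have d0: "derivation R A ?S (\<lambda>a. l (sq R A M a)) (\<lambda>a. \<zero>\<^bsub>?S\<^esub>)"
    by (rule derivation_zero_map[OF S]) (simp add: alg_hom_closed[OF l(1)] sq_closed)
  obtain D where D: "derivation R ?S ?S l D"
    "\<And>a. a \<in> carrier A \<Longrightarrow> D (sq R A M a) = \<zero>\<^bsub>?S\<^esub>" "\<And>m. m \<in> carrier M \<Longrightarrow> D (sj R A M m) = sj R A M m"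
    using sym_deriv[OF R A M S l(1) d0, of "sj R A M"]
    by (auto simp: l sj_closed sq_closed sj_add[OF R A M] sj_smult[OF R A M])
  obtain f where f: "alg_hom R (Tan R ?S) ?S f" "f \<in> extensional (carrier (Tan R ?S))"
    "\<And>v. v \<in> carrier ?S \<Longrightarrow> f (tp R ?S v) = l v" "\<And>v. v \<in> carrier ?S \<Longrightarrow> f (td R ?S v) = D v"
    using tan_univ[OF R S S l(1) D(1)] by blast
  show ?thesis by (rule that[OF f(1,2)]) (simp_all add: f(3,4) l D sq_closed sj_closed)
qed

lemma
  assumes R: "cring R" and A: "is_alg R A" and M: "module A M"
  shows lam_alg_hom: "alg_hom R (Tan R (Sym R A M)) (Sym R A M) (lam R A M)"
    and lam_tp_sq: "a \<in> carrier A \<Longrightarrow> lam R A M (tp R (Sym R A M) (sq R A M a)) = sq R A M a"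
    and lam_td_sq: "a \<in> carrier A \<Longrightarrow> lam R A M (td R (Sym R A M) (sq R A M a)) = \<zero>\<^bsub>Sym R A M\<^esub>"
    and lam_tp_sj: "m \<in> carrier M \<Longrightarrow> lam R A M (tp R (Sym R A M) (sj R A M m)) = \<zero>\<^bsub>Sym R A M\<^esub>"
    and lam_td_sj: "m \<in> carrier M \<Longrightarrow> lam R A M (td R (Sym R A M) (sj R A M m)) = sj R A M m"
proof -
  let ?S = "Sym R A M"
  note S = Sym_is_alg[OF R, of A M]
  obtain f where f: "alg_hom R (Tan R ?S) ?S f" "f \<in> extensional (carrier (Tan R ?S))"
    "\<forall>a\<in>carrier A. f (tp R ?S (sq R A M a)) = sq R A M a \<and> f (td R ?S (sq R A M a)) = \<zero>\<^bsub>?S\<^esub>"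
    "\<forall>m\<in>carrier M. f (tp R ?S (sj R A M m)) = \<zero>\<^bsub>?S\<^esub> \<and> f (td R ?S (sj R A M m)) = sj R A M m"
    by (rule lam_exists[OF assms])
  have "lam R A M = f"
    unfolding lam_def
  proof (rule the_map_eq[OF f(1,2)])
    fix G x assume G: "alg_hom R (Tan R ?S) ?S G"
      "(\<forall>a\<in>carrier A. G (tp R ?S (sq R A M a)) = sq R A M a \<and> G (td R ?S (sq R A M a)) = \<zero>\<^bsub>?S\<^esub>)
     \<and> (\<forall>m\<in>carrier M. G (tp R ?S (sj R A M m)) = \<zero>\<^bsub>?S\<^esub> \<and> G (td R ?S (sj R A M m)) = sj R A M m)"
      and x: "x \<in> carrier (Tan R ?S)"
    show "G x = f x"
      by (rule tan_pres_hom_eq[OF R S Sym_def G(1) f(1) _ x])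
         (use G(2) f(3,4) in \<open>auto simp flip: Sym_def sq_def sj_def\<close>)
  qed (use f(3,4) in blast)
  then show "alg_hom R (Tan R ?S) ?S (lam R A M)"
    and "a \<in> carrier A \<Longrightarrow> lam R A M (tp R ?S (sq R A M a)) = sq R A M a"
    and "a \<in> carrier A \<Longrightarrow> lam R A M (td R ?S (sq R A M a)) = \<zero>\<^bsub>?S\<^esub>"
    and "m \<in> carrier M \<Longrightarrow> lam R A M (tp R ?S (sj R A M m)) = \<zero>\<^bsub>?S\<^esub>"
    and "m \<in> carrier M \<Longrightarrow> lam R A M (td R ?S (sj R A M m)) = sj R A M m"
    using f by auto
qed

section \<open>Tensor products of algebras\<close>

lemma tens_is_alg: "cring R \<Longrightarrow> is_alg R (tens R X Y C f g)"
  by (simp add: tens_def pres_is_alg)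

context
  fixes R :: "'r ring" and X :: "('x, 'r) ralg" and Y :: "('y, 'r) ralg"
    and C :: "'c set" and f :: "'c \<Rightarrow> 'x" and g :: "'c \<Rightarrow> 'y"
  assumes R: "cring R" and X: "is_alg R X" and Y: "is_alg R Y"
    and f: "f ` C \<subseteq> carrier X" and g: "g ` C \<subseteq> carrier Y"
begin

lemma tens_rel_wf:
  assumes "(p, q) \<in> hom_rel R X TL \<union> hom_rel R Y TR \<union> {(Var (TL (f c)), Var (TR (g c))) | c. c \<in> C}"
  shows "pwf R (TL ` carrier X \<union> TR ` carrier Y) p \<and> pwf R (TL ` carrier X \<union> TR ` carrier Y) q"
  using assms f g hom_rel_wf[OF X, of TL "TL ` carrier X \<union> TR ` carrier Y" p q]
    hom_rel_wf[OF Y, of TR "TL ` carrier X \<union> TR ` carrier Y" p q]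
  by (auto simp: image_subset_iff)

lemma tens_inl_alg_hom: "alg_hom R X (tens R X Y C f g) (\<lambda>x. gen (tens R X Y C f g) (TL x))"
  unfolding tens_def by (rule gen_alg_hom[OF R X]) auto

lemma tens_inr_alg_hom: "alg_hom R Y (tens R X Y C f g) (\<lambda>y. gen (tens R X Y C f g) (TR y))"
  unfolding tens_def by (rule gen_alg_hom[OF R Y]) auto

lemma tens_glue:
  assumes "c \<in> C"
  shows "gen (tens R X Y C f g) (TL (f c)) = gen (tens R X Y C f g) (TR (g c))"
proof -
  have rel: "(Var (TL (f c)), Var (TR (g c)))
      \<in> hom_rel R X TL \<union> hom_rel R Y TR \<union> {(Var (TL (f c)), Var (TR (g c))) | c. c \<in> C}"
    using assms by blast
  show ?thesis
    using gen_relation[OF R rel] tens_rel_wf[OF rel] unfolding tens_def by simp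
qed

lemma tens_univ:
  assumes D: "is_alg R D" and \<phi>: "alg_hom R X D \<phi>" and \<psi>: "alg_hom R Y D \<psi>"
    and comp: "\<And>c. c \<in> C \<Longrightarrow> \<phi> (f c) = \<psi> (g c)"
  obtains F where "alg_hom R (tens R X Y C f g) D F" "F \<in> extensional (carrier (tens R X Y C f g))"
    "\<forall>x\<in>carrier X. F (gen (tens R X Y C f g) (TL x)) = \<phi> x"
    "\<forall>y\<in>carrier Y. F (gen (tens R X Y C f g) (TR y)) = \<psi> y"
proof -
  let ?\<chi> = "\<lambda>z. case z of TL x \<Rightarrow> \<phi> x | TR y \<Rightarrow> \<psi> y"
  have rel: "eval_pexpr R D ?\<chi> p = eval_pexpr R D ?\<chi> q"
    if "(p, q) \<in> hom_rel R X TL \<union> hom_rel R Y TR \<union> {(Var (TL (f c)), Var (TR (g c))) | c. c \<in> C}" for p q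
    using that eval_pexpr_hom_rel[of p q R X TL D ?\<chi>] eval_pexpr_hom_rel[of p q R Y TR D ?\<chi>] \<phi> \<psi>
    by (auto simp: comp)
  have \<chi>_closed: "?\<chi> z \<in> carrier D" if "z \<in> TL ` carrier X \<union> TR ` carrier Y" for z
    using that by (auto simp: alg_hom_closed[OF \<phi>] alg_hom_closed[OF \<psi>])
  obtain F where F: "alg_hom R (tens R X Y C f g) D F" "F \<in> extensional (carrier (tens R X Y C f g))"
    "\<forall>z\<in>TL ` carrier X \<union> TR ` carrier Y. F (gen (tens R X Y C f g) z) = ?\<chi> z"
    by (rule pres_univ[OF tens_def R D tens_rel_wf \<chi>_closed rel])
  show ?thesis by (rule that[OF F(1,2)]) (use F(3) in auto)
qed

lemma tens_hom_eq:
  assumes D: "is_alg R D"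
    and F1: "alg_hom R (tens R X Y C f g) D F1" and F2: "alg_hom R (tens R X Y C f g) D F2"
    and eq_inl: "\<And>x. x \<in> carrier X \<Longrightarrow> F1 (gen (tens R X Y C f g) (TL x)) = F2 (gen (tens R X Y C f g) (TL x))"
    and eq_inr: "\<And>y. y \<in> carrier Y \<Longrightarrow> F1 (gen (tens R X Y C f g) (TR y)) = F2 (gen (tens R X Y C f g) (TR y))"
    and z: "z \<in> carrier (tens R X Y C f g)"
  shows "F1 z = F2 z"
  using pres_hom_eq[OF R D F1[unfolded tens_def] F2[unfolded tens_def] _ z[unfolded tens_def]] eq_inl eq_inr
  by (auto simp flip: tens_def)

lemma tens_deriv:
  assumes D: "is_alg R D" and G: "alg_hom R (tens R X Y C f g) D G"
    and d1: "derivation R X D (\<lambda>x. G (gen (tens R X Y C f g) (TL x))) d1"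
    and d2: "derivation R Y D (\<lambda>y. G (gen (tens R X Y C f g) (TR y))) d2"
    and comp: "\<And>c. c \<in> C \<Longrightarrow> d1 (f c) = d2 (g c)"
  obtains \<delta> where "derivation R (tens R X Y C f g) D G \<delta>"
    "\<forall>x\<in>carrier X. \<delta> (gen (tens R X Y C f g) (TL x)) = d1 x"
    "\<forall>y\<in>carrier Y. \<delta> (gen (tens R X Y C f g) (TR y)) = d2 y"
proof -
  let ?P = "tens R X Y C f g"
  let ?\<chi> = "\<lambda>z. case z of TL x \<Rightarrow> d1 x | TR y \<Rightarrow> d2 y"
  have rel: "deriv_pexpr R D (\<lambda>z. G (gen ?P z)) ?\<chi> p = deriv_pexpr R D (\<lambda>z. G (gen ?P z)) ?\<chi> q"
    if "(p, q) \<in> hom_rel R X TL \<union> hom_rel R Y TR \<union> {(Var (TL (f c)), Var (TR (g c))) | c. c \<in> C}" for p q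
    using that deriv_pexpr_hom_rel[of p q R X TL D "\<lambda>z. G (gen ?P z)" ?\<chi>]
      deriv_pexpr_hom_rel[of p q R Y TR D "\<lambda>z. G (gen ?P z)" ?\<chi>] d1 d2
    by (auto simp: comp)
  have \<chi>_closed: "?\<chi> z \<in> carrier D" if "z \<in> TL ` carrier X \<union> TR ` carrier Y" for z
    using that by (auto simp: derivation_closed[OF d1] derivation_closed[OF d2])
  obtain \<delta> where \<delta>: "derivation R ?P D G \<delta>" "\<forall>z\<in>TL ` carrier X \<union> TR ` carrier Y. \<delta> (gen ?P z) = ?\<chi> z"
    by (rule pres_deriv[OF tens_def R D tens_rel_wf G \<chi>_closed rel])
  show ?thesis by (rule that[OF \<delta>(1)]) (use \<delta>(2) in auto)
qed

lemma etens_one_right: "x \<in> carrier X \<Longrightarrow> etens (tens R X Y C f g) x \<one>\<^bsub>Y\<^esub> = gen (tens R X Y C f g) (TL x)"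
  and etens_one_left: "y \<in> carrier Y \<Longrightarrow> etens (tens R X Y C f g) \<one>\<^bsub>X\<^esub> y = gen (tens R X Y C f g) (TR y)"
proof -
  interpret P: cring "tens R X Y C f g" using is_algD[OF tens_is_alg[OF R, of X Y C f g]] by simp
  show "x \<in> carrier X \<Longrightarrow> etens (tens R X Y C f g) x \<one>\<^bsub>Y\<^esub> = gen (tens R X Y C f g) (TL x)"
    and "y \<in> carrier Y \<Longrightarrow> etens (tens R X Y C f g) \<one>\<^bsub>X\<^esub> y = gen (tens R X Y C f g) (TR y)"
    using alg_hom_one[OF tens_inr_alg_hom] alg_hom_one[OF tens_inl_alg_hom]
      alg_hom_closed[OF tens_inl_alg_hom] alg_hom_closed[OF tens_inr_alg_hom]
    by (simp_all add: etens_def)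
qed

end

lemma tensmap:
  assumes R: "cring R" and X: "is_alg R X" and Y: "is_alg R Y"
    and f: "f ` C \<subseteq> carrier X" and g: "g ` C \<subseteq> carrier Y"
    and X': "is_alg R X'" and Y': "is_alg R Y'"
    and f': "f' ` C' \<subseteq> carrier X'" and g': "g' ` C' \<subseteq> carrier Y'"
    and \<phi>: "alg_hom R X X' \<phi>" and \<psi>: "alg_hom R Y Y' \<psi>"
    and comp: "\<And>c. c \<in> C \<Longrightarrow> gen (tens R X' Y' C' f' g') (TL (\<phi> (f c))) = gen (tens R X' Y' C' f' g') (TR (\<psi> (g c)))"
  shows tensmap_alg_hom: "alg_hom R (tens R X Y C f g) (tens R X' Y' C' f' g')
      (tensmap R (tens R X Y C f g) (tens R X' Y' C' f' g') X Y \<phi> \<psi>)"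
    and tensmap_inl: "x \<in> carrier X \<Longrightarrow> tensmap R (tens R X Y C f g) (tens R X' Y' C' f' g') X Y \<phi> \<psi>
      (gen (tens R X Y C f g) (TL x)) = gen (tens R X' Y' C' f' g') (TL (\<phi> x))"
    and tensmap_inr: "y \<in> carrier Y \<Longrightarrow> tensmap R (tens R X Y C f g) (tens R X' Y' C' f' g') X Y \<phi> \<psi>
      (gen (tens R X Y C f g) (TR y)) = gen (tens R X' Y' C' f' g') (TR (\<psi> y))"
proof -
  let ?P = "tens R X Y C f g" and ?P' = "tens R X' Y' C' f' g'"
  have inl': "alg_hom R X ?P' (\<lambda>x. gen ?P' (TL (\<phi> x)))"
    by (rule alg_hom_comp[OF \<phi>]) (rule tens_inl_alg_hom[OF R X' Y' f' g'])
  have inr': "alg_hom R Y ?P' (\<lambda>y. gen ?P' (TR (\<psi> y)))"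
    by (rule alg_hom_comp[OF \<psi>]) (rule tens_inr_alg_hom[OF R X' Y' f' g'])
  obtain F where F: "alg_hom R ?P ?P' F" "F \<in> extensional (carrier ?P)"
      "\<forall>x\<in>carrier X. F (gen ?P (TL x)) = gen ?P' (TL (\<phi> x))"
      "\<forall>y\<in>carrier Y. F (gen ?P (TR y)) = gen ?P' (TR (\<psi> y))"
    by (rule tens_univ[OF R X Y f g tens_is_alg[OF R] inl' inr' comp])
  have "tensmap R ?P ?P' X Y \<phi> \<psi> = F"
    unfolding tensmap_def
  proof (rule the_map_eq[OF F(1,2)])
    fix G z assume G: "alg_hom R ?P ?P' G"
      "(\<forall>x\<in>carrier X. G (gen ?P (TL x)) = gen ?P' (TL (\<phi> x))) \<and> (\<forall>y\<in>carrier Y. G (gen ?P (TR y)) = gen ?P' (TR (\<psi> y)))"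
      and z: "z \<in> carrier ?P"
    show "G z = F z"
      by (rule tens_hom_eq[OF R X Y f g tens_is_alg[OF R] G(1) F(1) _ _ z]) (use G(2) F(3,4) in simp_all)
  qed (use F(3,4) in blast)
  then show "alg_hom R ?P ?P' (tensmap R ?P ?P' X Y \<phi> \<psi>)"
    and "x \<in> carrier X \<Longrightarrow> tensmap R ?P ?P' X Y \<phi> \<psi> (gen ?P (TL x)) = gen ?P' (TL (\<phi> x))"
    and "y \<in> carrier Y \<Longrightarrow> tensmap R ?P ?P' X Y \<phi> \<psi> (gen ?P (TR y)) = gen ?P' (TR (\<psi> y))"
    using F by auto
qed

lemma add_span_closed:
  assumes "abelian_group P" "S \<subseteq> carrier P" "x \<in> add_span P S"
  shows "x \<in> carrier P"
proof -
  interpret P: abelian_group P by fact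
  show ?thesis using assms(3)
    by (induction rule: add_span.induct) (use assms(2) in auto)
qed

lemma add_span_map:
  assumes P: "abelian_group P" and Q: "abelian_group Q" and S: "S \<subseteq> carrier P" and x: "x \<in> add_span P S"
    and f_add: "\<And>x y. x \<in> carrier P \<Longrightarrow> y \<in> carrier P \<Longrightarrow> f (x \<oplus>\<^bsub>P\<^esub> y) = f x \<oplus>\<^bsub>Q\<^esub> f y"
    and f_zero: "f \<zero>\<^bsub>P\<^esub> = \<zero>\<^bsub>Q\<^esub>"
    and f_neg: "\<And>x. x \<in> carrier P \<Longrightarrow> f (\<ominus>\<^bsub>P\<^esub> x) = \<ominus>\<^bsub>Q\<^esub> f x"
    and f_base: "\<And>s. s \<in> S \<Longrightarrow> f s \<in> add_span Q T"
  shows "f x \<in> add_span Q T"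
  using x
proof (induction rule: add_span.induct)
  case (add x y) then show ?case
    using add_span_closed[OF P S] by (simp add: f_add add_span.add)
next
  case (neg x) then show ?case
    using add_span_closed[OF P S] by (simp add: f_neg add_span.neg)
qed (simp_all add: f_zero add_span.zero f_base)

abbreviation lin_span :: "('a, 'z) ring_scheme \<Rightarrow> ('c, 'w) ring_scheme \<Rightarrow> ('a \<Rightarrow> 'c) \<Rightarrow> 'c set \<Rightarrow> 'c set" where
  "lin_span A C h S \<equiv> add_span C {h a \<otimes>\<^bsub>C\<^esub> s | a s. a \<in> carrier A \<and> s \<in> S}"

context
  fixes A :: "('a, 'z) ring_scheme" and C :: "('c, 'w) ring_scheme" and h S
  assumes A: "cring A" and C: "cring C" and h: "h \<in> ring_hom A C" and S: "S \<subseteq> carrier C"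
begin

lemma lin_span_gens_closed: "{h a \<otimes>\<^bsub>C\<^esub> s | a s. a \<in> carrier A \<and> s \<in> S} \<subseteq> carrier C"
  using S ring_hom_closed[OF h] cring.cring_simprules(5)[OF C] by blast

lemma lin_span_closed: "u \<in> lin_span A C h S \<Longrightarrow> u \<in> carrier C"
  using add_span_closed[OF _ lin_span_gens_closed] C by (simp add: cring_def ring_def)

lemma lin_span_base: "s \<in> S \<Longrightarrow> s \<in> lin_span A C h S"
proof -
  interpret A: cring A by (rule A)
  interpret C: cring C by (rule C)
  assume s: "s \<in> S"
  have "s = h \<one>\<^bsub>A\<^esub> \<otimes>\<^bsub>C\<^esub> s" using s S by (auto simp: ring_hom_one[OF h])
  then show ?thesis using s by (auto intro!: add_span.base)
qed

lemma lin_span_smult: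
  assumes c: "c \<in> carrier A" and u: "u \<in> lin_span A C h S"
  shows "h c \<otimes>\<^bsub>C\<^esub> u \<in> lin_span A C h S"
proof -
  interpret A: cring A by (rule A)
  interpret C: cring C by (rule C)
  have hc: "h c \<in> carrier C" using ring_hom_closed[OF h c] .
  show ?thesis
  proof (rule add_span_map[OF C.abelian_group_axioms C.abelian_group_axioms lin_span_gens_closed u])
    fix t assume "t \<in> {h a \<otimes>\<^bsub>C\<^esub> s | a s. a \<in> carrier A \<and> s \<in> S}"
    then obtain a s where t: "t = h a \<otimes>\<^bsub>C\<^esub> s" "a \<in> carrier A" "s \<in> S" by blast
    then have "h c \<otimes>\<^bsub>C\<^esub> t = h (c \<otimes>\<^bsub>A\<^esub> a) \<otimes>\<^bsub>C\<^esub> s"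
      using c S ring_hom_closed[OF h] by (auto simp: ring_hom_mult[OF h] C.m_assoc)
    then show "h c \<otimes>\<^bsub>C\<^esub> t \<in> lin_span A C h S" using t c by (auto intro!: add_span.base)
  qed (use hc in \<open>simp_all add: C.r_distr C.r_minus\<close>)
qed

end

lemma pres_hom_deriv_lin_span:
  assumes R: "cring R" and A: "is_alg R A" and C: "is_alg R C" and P: "P = pres R G Rel"
    and h: "alg_hom R P C h" and \<delta>: "derivation R P C h \<delta>"
    and k: "alg_hom R A C k" and S: "S \<subseteq> carrier C"
    and gen: "\<And>x. x \<in> G \<Longrightarrow> h (gen P x) \<in> k ` carrier A \<and> \<delta> (gen P x) \<in> lin_span A C k S"
    and X: "X \<in> carrier P"
  shows "h X \<in> k ` carrier A \<and> \<delta> X \<in> lin_span A C k S"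
proof -
  interpret A: cring A using is_algD[OF A] by simp
  interpret C: cring C using is_algD[OF C] by simp
  let ?P = "pres R G Rel"
  note P_alg = pres_is_alg[OF R, of G Rel]
  note h = h[unfolded P] and \<delta> = \<delta>[unfolded P]
  note smult = lin_span_smult[OF A.is_cring C.is_cring alg_hom_def[THEN iffD1, OF k, THEN conjunct1] S]
  show ?thesis
    using R X[unfolded P]
  proof (induction rule: pres_induct)
    case (gen x) then show ?case using assms(9) P by simp
  next
    case (rmap r)
    then have "h (rmap ?P r) = k (rmap A r)" by (simp add: alg_hom_rmap[OF h] alg_hom_rmap[OF k])
    then show ?case
      using rmap by (auto simp: is_alg_rmap_closed[OF A] derivation_rmap[OF \<delta>] add_span.zero)
  next
    case (add X Y)
    then obtain a b where "a \<in> carrier A" "b \<in> carrier A" "h X = k a" "h Y = k b" by blast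
    then have "h (X \<oplus>\<^bsub>?P\<^esub> Y) = k (a \<oplus>\<^bsub>A\<^esub> b)"
      using add by (simp add: alg_hom_add[OF h] alg_hom_add[OF k])
    then show ?case
      using add \<open>a \<in> carrier A\<close> \<open>b \<in> carrier A\<close> by (auto simp: derivation_add[OF \<delta>] intro: add_span.add)
  next
    case (mult X Y)
    then obtain a b where ab: "a \<in> carrier A" "b \<in> carrier A" "h X = k a" "h Y = k b" by blast
    then have "h (X \<otimes>\<^bsub>?P\<^esub> Y) = k (a \<otimes>\<^bsub>A\<^esub> b)"
      using mult by (simp add: alg_hom_mult[OF h] alg_hom_mult[OF k])
    moreover have "\<delta> (X \<otimes>\<^bsub>?P\<^esub> Y) = k a \<otimes>\<^bsub>C\<^esub> \<delta> Y \<oplus>\<^bsub>C\<^esub> k b \<otimes>\<^bsub>C\<^esub> \<delta> X"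
      using mult ab by (simp add: derivation_mult[OF \<delta>])
    ultimately show ?case
      using mult ab by (auto intro!: add_span.add smult)
  next
    case (neg X)
    then obtain a where "a \<in> carrier A" "h X = k a" by blast
    then have "h (\<ominus>\<^bsub>?P\<^esub> X) = k (\<ominus>\<^bsub>A\<^esub> a)"
      using neg by (simp add: alg_hom_neg[OF P_alg C h] alg_hom_neg[OF A C k])
    then show ?case
      using neg \<open>a \<in> carrier A\<close> by (auto simp: derivation_neg[OF R P_alg C \<delta>] intro: add_span.neg)
  qed
qed

section \<open>Horizontal connections\<close>

locale alg_module =
  fixes R :: "'r ring" and A :: "('a, 'r) ralg" and M :: "('a, 'm) module"
  assumes R: "cring R" and A: "is_alg R A" and M: "module A M"
begin

abbreviation "TA \<equiv> Tan R A"

abbreviation "SymM \<equiv> Sym R A M"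

abbreviation "TS \<equiv> Tan R SymM"

abbreviation "E \<equiv> TE R A M"

abbreviation "F \<equiv> TF R A M"

abbreviation "Tp \<equiv> Tmap R A TA (tp R A)"

abbreviation "Tq \<equiv> Tmap R A SymM (sq R A M)"

text \<open>\<open>in1 w = w \<otimes> 1\<close> and \<open>in2 v = 1 \<otimes> v\<close>, in \<open>E\<close> and in \<open>F\<close>.\<close>

abbreviation in1 where "in1 w \<equiv> gen E (TL w)"

abbreviation in2 where "in2 v \<equiv> gen E (TR v)"

abbreviation in1F where "in1F x \<equiv> gen F (TL x)"

abbreviation in2F where "in2F y \<equiv> gen F (TR y)"

lemma is_alg_TA: "is_alg R TA" and is_alg_TTA: "is_alg R (Tan R TA)"
  and is_alg_SymM: "is_alg R SymM" and is_alg_TS: "is_alg R TS"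
  and is_alg_E: "is_alg R E" and is_alg_F: "is_alg R F"
  by (simp_all add: Tan_is_alg Sym_is_alg tens_is_alg TE_def TF_def R)

lemma cring_TA: "cring TA" and cring_SymM: "cring SymM" and cring_E: "cring E" and cring_F: "cring F"
  using is_algD(1) is_alg_TA is_alg_SymM is_alg_E is_alg_F by blast+

lemma
  shows Tp_alg_hom: "alg_hom R TA (Tan R TA) Tp"
    and Tp_tp: "a \<in> carrier A \<Longrightarrow> Tp (tp R A a) = tp R TA (tp R A a)"
    and Tp_td: "a \<in> carrier A \<Longrightarrow> Tp (td R A a) = td R TA (tp R A a)"
    and Tq_alg_hom: "alg_hom R TA TS Tq"
    and Tq_tp: "a \<in> carrier A \<Longrightarrow> Tq (tp R A a) = tp R SymM (sq R A M a)"
    and Tq_td: "a \<in> carrier A \<Longrightarrow> Tq (td R A a) = td R SymM (sq R A M a)"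
  using Tmap_alg_hom[OF R A is_alg_TA tp_alg_hom[OF R A]] Tmap_tp[OF R A is_alg_TA tp_alg_hom[OF R A]]
    Tmap_td[OF R A is_alg_TA tp_alg_hom[OF R A]] Tmap_alg_hom[OF R A is_alg_SymM sq_alg_hom[OF R A]]
    Tmap_tp[OF R A is_alg_SymM sq_alg_hom[OF R A]] Tmap_td[OF R A is_alg_SymM sq_alg_hom[OF R A]]
  by auto

lemma tp_image: "tp R A ` carrier A \<subseteq> carrier TA"
  and sq_image: "sq R A M ` carrier A \<subseteq> carrier SymM"
  and Tp_image: "Tp ` carrier TA \<subseteq> carrier (Tan R TA)"
  and Tq_image: "Tq ` carrier TA \<subseteq> carrier TS"
  by (auto simp: tp_closed sq_closed alg_hom_closed[OF Tp_alg_hom] alg_hom_closed[OF Tq_alg_hom])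

lemmas E_facts = R is_alg_TA is_alg_SymM tp_image sq_image

lemmas F_facts = R is_alg_TTA is_alg_TS Tp_image Tq_image

lemmas in1_alg_hom = tens_inl_alg_hom[where C="carrier A" and f="tp R A" and g="sq R A M", OF E_facts, folded TE_def]
  and in2_alg_hom = tens_inr_alg_hom[where C="carrier A" and f="tp R A" and g="sq R A M", OF E_facts, folded TE_def]
  and in1_tp = tens_glue[where C="carrier A" and f="tp R A" and g="sq R A M", OF E_facts, folded TE_def]
  and E_univ = tens_univ[where C="carrier A" and f="tp R A" and g="sq R A M", OF E_facts, folded TE_def]
  and E_deriv = tens_deriv[where C="carrier A" and f="tp R A" and g="sq R A M", OF E_facts, folded TE_def]
  and E_one_right = etens_one_right[where C="carrier A" and f="tp R A" and g="sq R A M", OF E_facts, folded TE_def]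
  and E_one_left = etens_one_left[where C="carrier A" and f="tp R A" and g="sq R A M", OF E_facts, folded TE_def]
  and in1F_alg_hom = tens_inl_alg_hom[where C="carrier TA" and f=Tp and g=Tq, OF F_facts, folded TF_def]
  and in2F_alg_hom = tens_inr_alg_hom[where C="carrier TA" and f=Tp and g=Tq, OF F_facts, folded TF_def]
  and in1F_Tp = tens_glue[where C="carrier TA" and f=Tp and g=Tq, OF F_facts, folded TF_def]

lemma in1_closed: "w \<in> carrier TA \<Longrightarrow> in1 w \<in> carrier E"
  and in2_closed: "v \<in> carrier SymM \<Longrightarrow> in2 v \<in> carrier E"
  using alg_hom_closed[OF in1_alg_hom] alg_hom_closed[OF in2_alg_hom] by auto

lemma in1_zero: "in1 \<zero>\<^bsub>TA\<^esub> = \<zero>\<^bsub>E\<^esub>" and in2_zero: "in2 \<zero>\<^bsub>SymM\<^esub> = \<zero>\<^bsub>E\<^esub>"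
  using alg_hom_zero[OF is_alg_TA is_alg_E in1_alg_hom] alg_hom_zero[OF is_alg_SymM is_alg_E in2_alg_hom]
  by auto

lemma theta_exists:
  obtains f where "alg_hom R (Tan R E) F f" "f \<in> extensional (carrier (Tan R E))"
    "\<forall>w\<in>carrier TA. f (tp R E (in1 w)) = in1F (tp R TA w) \<and> f (td R E (in1 w)) = in1F (td R TA w)"
    "\<forall>v\<in>carrier SymM. f (tp R E (in2 v)) = in2F (tp R SymM v) \<and> f (td R E (in2 v)) = in2F (td R SymM v)"
proof -
  have \<phi>: "alg_hom R TA F (\<lambda>w. in1F (tp R TA w))"
    by (rule alg_hom_comp[OF tp_alg_hom[OF R is_alg_TA] in1F_alg_hom])
  have \<psi>: "alg_hom R SymM F (\<lambda>v. in2F (tp R SymM v))"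
    by (rule alg_hom_comp[OF tp_alg_hom[OF R is_alg_SymM] in2F_alg_hom])
  have glue_tp: "in1F (tp R TA (tp R A c)) = in2F (tp R SymM (sq R A M c))" if "c \<in> carrier A" for c
    using in1F_Tp[of "tp R A c"] that by (simp add: Tp_tp Tq_tp tp_closed)
  have glue_td: "in1F (td R TA (tp R A c)) = in2F (td R SymM (sq R A M c))" if "c \<in> carrier A" for c
    using in1F_Tp[of "td R A c"] that by (simp add: Tp_td Tq_td td_closed)
  obtain g where g: "alg_hom R E F g" "g \<in> extensional (carrier E)"
    "\<forall>w\<in>carrier TA. g (in1 w) = in1F (tp R TA w)" "\<forall>v\<in>carrier SymM. g (in2 v) = in2F (tp R SymM v)"
    by (rule E_univ[OF is_alg_F \<phi> \<psi> glue_tp])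
  have d1: "derivation R TA F (\<lambda>w. g (in1 w)) (\<lambda>w. in1F (td R TA w))"
    by (rule derivation_cong[OF hom_comp_derivation[OF td_derivation[OF R is_alg_TA] in1F_alg_hom
          is_alg_TTA is_alg_F tp_closed]]) (simp_all add: g(3))
  have d2: "derivation R SymM F (\<lambda>v. g (in2 v)) (\<lambda>v. in2F (td R SymM v))"
    by (rule derivation_cong[OF hom_comp_derivation[OF td_derivation[OF R is_alg_SymM] in2F_alg_hom
          is_alg_TS is_alg_F tp_closed]]) (simp_all add: g(4))
  obtain \<delta> where \<delta>: "derivation R E F g \<delta>" "\<forall>w\<in>carrier TA. \<delta> (in1 w) = in1F (td R TA w)"
    "\<forall>v\<in>carrier SymM. \<delta> (in2 v) = in2F (td R SymM v)"
    by (rule E_deriv[OF is_alg_F g(1) d1 d2 glue_td])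
  obtain f where f: "alg_hom R (Tan R E) F f" "f \<in> extensional (carrier (Tan R E))"
    "\<And>z. z \<in> carrier E \<Longrightarrow> f (tp R E z) = g z" "\<And>z. z \<in> carrier E \<Longrightarrow> f (td R E z) = \<delta> z"
    using tan_univ[OF R is_alg_E is_alg_F g(1) \<delta>(1)] by blast
  show ?thesis
    by (rule that[OF f(1,2)]) (simp_all add: f(3,4) g(3,4) \<delta>(2,3) in1_closed in2_closed)
qed

lemma theta_candidate_etens:
  assumes f: "alg_hom R (Tan R E) F f"
    and f_in1: "\<forall>w\<in>carrier TA. f (tp R E (in1 w)) = in1F (tp R TA w) \<and> f (td R E (in1 w)) = in1F (td R TA w)"
    and f_in2: "\<forall>v\<in>carrier SymM. f (tp R E (in2 v)) = in2F (tp R SymM v) \<and> f (td R E (in2 v)) = in2F (td R SymM v)"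
    and w: "w \<in> carrier TA" and v: "v \<in> carrier SymM"
  shows "f (tp R E (etens E w v)) = etens F (tp R TA w) (tp R SymM v)"
    and "f (td R E (etens E w v)) = etens F (td R TA w) (tp R SymM v) \<oplus>\<^bsub>F\<^esub> etens F (tp R TA w) (td R SymM v)"
proof -
  interpret F: cring F by (rule cring_F)
  have f_tp: "alg_hom R E F (\<lambda>z. f (tp R E z))"
    by (rule alg_hom_comp[OF tp_alg_hom[OF R is_alg_E] f])
  have f_td: "derivation R E F (\<lambda>z. f (tp R E z)) (\<lambda>z. f (td R E z))"
    by (rule hom_comp_derivation[OF td_derivation[OF R is_alg_E] f Tan_is_alg[OF R] is_alg_F tp_closed])
  have closed: "in1F (tp R TA w) \<in> carrier F" "in1F (td R TA w) \<in> carrier F"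
      "in2F (tp R SymM v) \<in> carrier F" "in2F (td R SymM v) \<in> carrier F"
    using w v by (simp_all add: alg_hom_closed[OF in1F_alg_hom] alg_hom_closed[OF in2F_alg_hom] tp_closed td_closed)
  show "f (tp R E (etens E w v)) = etens F (tp R TA w) (tp R SymM v)"
    using w v f_in1 f_in2 by (simp add: etens_def alg_hom_mult[OF f_tp] in1_closed in2_closed)
  show "f (td R E (etens E w v)) = etens F (td R TA w) (tp R SymM v) \<oplus>\<^bsub>F\<^esub> etens F (tp R TA w) (td R SymM v)"
    using w v f_in1 f_in2 closed
    by (simp add: etens_def derivation_mult[OF f_td] in1_closed in2_closed F.m_comm F.a_comm)
qed

lemma
  shows theta_alg_hom: "alg_hom R (Tan R E) F (theta R A M)"
    and theta_tp_in1: "w \<in> carrier TA \<Longrightarrow> theta R A M (tp R E (in1 w)) = in1F (tp R TA w)"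
    and theta_td_in1: "w \<in> carrier TA \<Longrightarrow> theta R A M (td R E (in1 w)) = in1F (td R TA w)"
    and theta_tp_in2: "v \<in> carrier SymM \<Longrightarrow> theta R A M (tp R E (in2 v)) = in2F (tp R SymM v)"
    and theta_td_in2: "v \<in> carrier SymM \<Longrightarrow> theta R A M (td R E (in2 v)) = in2F (td R SymM v)"
proof -
  obtain f where f: "alg_hom R (Tan R E) F f" "f \<in> extensional (carrier (Tan R E))"
    "\<forall>w\<in>carrier TA. f (tp R E (in1 w)) = in1F (tp R TA w) \<and> f (td R E (in1 w)) = in1F (td R TA w)"
    "\<forall>v\<in>carrier SymM. f (tp R E (in2 v)) = in2F (tp R SymM v) \<and> f (td R E (in2 v)) = in2F (td R SymM v)"
    by (rule theta_exists)
  let ?P = "\<lambda>f. \<forall>w\<in>carrier TA. \<forall>v\<in>carrier SymM.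
        f (tp R E (etens E w v)) = etens F (tp R TA w) (tp R SymM v)
      \<and> f (td R E (etens E w v)) = etens F (td R TA w) (tp R SymM v) \<oplus>\<^bsub>F\<^esub> etens F (tp R TA w) (td R SymM v)"
  have P_f: "?P f" using theta_candidate_etens[OF f(1,3,4)] by blast
  have one: "\<one>\<^bsub>SymM\<^esub> \<in> carrier SymM" "\<one>\<^bsub>TA\<^esub> \<in> carrier TA"
    using cring.cring_simprules(6)[OF cring_SymM] cring.cring_simprules(6)[OF cring_TA] by auto
  have "theta R A M = f"
    unfolding theta_def
  proof (rule the_map_eq[where P="?P", OF f(1,2) P_f])
    fix G x assume G: "alg_hom R (Tan R E) F G" "?P G" and x: "x \<in> carrier (Tan R E)"
    have "G (tp R E (in1 w)) = f (tp R E (in1 w)) \<and> G (td R E (in1 w)) = f (td R E (in1 w))"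
      if "w \<in> carrier TA" for w
      using G(2) P_f that one by (simp flip: E_one_right[OF that])
    moreover have "G (tp R E (in2 v)) = f (tp R E (in2 v)) \<and> G (td R E (in2 v)) = f (td R E (in2 v))"
      if "v \<in> carrier SymM" for v
      using G(2) P_f that one by (simp flip: E_one_left[OF that])
    ultimately show "G x = f x"
      by (intro tan_pres_hom_eq[OF R is_alg_F TE_def[unfolded tens_def] G(1) f(1) _ x])
         (auto simp flip: tens_def TE_def)
  qed
  then show "alg_hom R (Tan R E) F (theta R A M)"
    and "w \<in> carrier TA \<Longrightarrow> theta R A M (tp R E (in1 w)) = in1F (tp R TA w)"
    and "w \<in> carrier TA \<Longrightarrow> theta R A M (td R E (in1 w)) = in1F (td R TA w)"
    and "v \<in> carrier SymM \<Longrightarrow> theta R A M (tp R E (in2 v)) = in2F (tp R SymM v)"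
    and "v \<in> carrier SymM \<Longrightarrow> theta R A M (td R E (in2 v)) = in2F (td R SymM v)"
    using f by auto
qed

abbreviation lift_zero where "lift_zero \<equiv> tensmap R F E (Tan R TA) TS (lift R A) (zmap R SymM)"

abbreviation zero_lam where "zero_lam \<equiv> tensmap R F E (Tan R TA) TS (zmapT R A) (lam R A M)"

lemmas F_to_E_facts = R is_alg_TTA is_alg_TS Tp_image Tq_image is_alg_TA is_alg_SymM tp_image sq_image

lemmas tensmap_FE_alg_hom = tensmap_alg_hom[where C="carrier TA" and f=Tp and g=Tq and C'="carrier A"
    and f'="tp R A" and g'="sq R A M", OF F_to_E_facts, folded TE_def TF_def]
  and tensmap_FE_in1F = tensmap_inl[where C="carrier TA" and f=Tp and g=Tq and C'="carrier A"
    and f'="tp R A" and g'="sq R A M", OF F_to_E_facts, folded TE_def TF_def]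
  and tensmap_FE_in2F = tensmap_inr[where C="carrier TA" and f=Tp and g=Tq and C'="carrier A"
    and f'="tp R A" and g'="sq R A M", OF F_to_E_facts, folded TE_def TF_def]

lemma
  shows lift_zero_alg_hom: "alg_hom R F E lift_zero"
    and lift_zero_in1F: "x \<in> carrier (Tan R TA) \<Longrightarrow> lift_zero (in1F x) = in1 (lift R A x)"
    and lift_zero_in2F: "y \<in> carrier TS \<Longrightarrow> lift_zero (in2F y) = in2 (zmap R SymM y)"
proof -
  have glue: "in1 (lift R A (Tp c)) = in2 (zmap R SymM (Tq c))" if "c \<in> carrier TA" for c
  proof (rule tan_hom_eq[OF R is_alg_E _ _ _ that])
    show "alg_hom R TA E (\<lambda>c. in1 (lift R A (Tp c)))"
      by (rule alg_hom_comp[OF Tp_alg_hom alg_hom_comp[OF lift_alg_hom[OF R A] in1_alg_hom]])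
    show "alg_hom R TA E (\<lambda>c. in2 (zmap R SymM (Tq c)))"
      by (rule alg_hom_comp[OF Tq_alg_hom alg_hom_comp[OF zmap_alg_hom[OF R is_alg_SymM] in2_alg_hom]])
  qed (simp add: Tp_tp Tp_td Tq_tp Tq_td lift_tp_tp[OF R A] lift_td_tp[OF R A] zmap_tp[OF R is_alg_SymM]
      zmap_td[OF R is_alg_SymM] in1_tp in1_zero in2_zero sq_closed)
  note maps = lift_alg_hom[OF R A] zmap_alg_hom[OF R is_alg_SymM] glue
  show "alg_hom R F E lift_zero"
    and "x \<in> carrier (Tan R TA) \<Longrightarrow> lift_zero (in1F x) = in1 (lift R A x)"
    and "y \<in> carrier TS \<Longrightarrow> lift_zero (in2F y) = in2 (zmap R SymM y)"
    by (simp_all add: tensmap_FE_alg_hom[OF maps] tensmap_FE_in1F[OF maps] tensmap_FE_in2F[OF maps])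
qed

lemma
  shows zero_lam_alg_hom: "alg_hom R F E zero_lam"
    and zero_lam_in1F: "x \<in> carrier (Tan R TA) \<Longrightarrow> zero_lam (in1F x) = in1 (zmapT R A x)"
    and zero_lam_in2F: "y \<in> carrier TS \<Longrightarrow> zero_lam (in2F y) = in2 (lam R A M y)"
proof -
  have glue: "in1 (zmapT R A (Tp c)) = in2 (lam R A M (Tq c))" if "c \<in> carrier TA" for c
  proof (rule tan_hom_eq[OF R is_alg_E _ _ _ that])
    show "alg_hom R TA E (\<lambda>c. in1 (zmapT R A (Tp c)))"
      by (rule alg_hom_comp[OF Tp_alg_hom alg_hom_comp[OF zmapT_alg_hom[OF R A] in1_alg_hom]])
    show "alg_hom R TA E (\<lambda>c. in2 (lam R A M (Tq c)))"
      by (rule alg_hom_comp[OF Tq_alg_hom alg_hom_comp[OF lam_alg_hom[OF R A M] in2_alg_hom]])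
  qed (simp add: Tp_tp Tp_td Tq_tp Tq_td zmapT_tp[OF R A] zmapT_td[OF R A] lam_tp_sq[OF R A M]
      lam_td_sq[OF R A M] in1_tp in1_zero in2_zero tp_closed)
  note maps = zmapT_alg_hom[OF R A] lam_alg_hom[OF R A M] glue
  show "alg_hom R F E zero_lam"
    and "x \<in> carrier (Tan R TA) \<Longrightarrow> zero_lam (in1F x) = in1 (zmapT R A x)"
    and "y \<in> carrier TS \<Longrightarrow> zero_lam (in2F y) = in2 (lam R A M y)"
    by (simp_all add: tensmap_FE_alg_hom[OF maps] tensmap_FE_in1F[OF maps] tensmap_FE_in2F[OF maps])
qed

text \<open>\<open>pi0\<close> and \<open>rho0\<close> project \<open>E\<close> onto degree zero in \<open>\<Omega>(A)\<close> and in \<open>M\<close>, and the derivations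
  \<open>pi1\<close>, \<open>rho1\<close> along them project onto degree one.\<close>

definition "pi0 z = lift_zero (theta R A M (tp R E z))"

definition "pi1 z = lift_zero (theta R A M (td R E z))"

definition "rho0 z = zero_lam (theta R A M (tp R E z))"

definition "rho1 z = zero_lam (theta R A M (td R E z))"

lemma pi0_alg_hom: "alg_hom R E E pi0"
  unfolding pi0_def[abs_def]
  by (rule alg_hom_comp[OF tp_alg_hom[OF R is_alg_E] alg_hom_comp[OF theta_alg_hom lift_zero_alg_hom]])

lemma rho0_alg_hom: "alg_hom R E E rho0"
  unfolding rho0_def[abs_def]
  by (rule alg_hom_comp[OF tp_alg_hom[OF R is_alg_E] alg_hom_comp[OF theta_alg_hom zero_lam_alg_hom]])

lemma pi1_derivation: "derivation R E E pi0 pi1"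
  unfolding pi0_def[abs_def] pi1_def[abs_def]
  by (rule hom_comp_derivation[OF td_derivation[OF R is_alg_E]
        alg_hom_comp[OF theta_alg_hom lift_zero_alg_hom] Tan_is_alg[OF R] is_alg_E tp_closed])

lemma rho1_derivation: "derivation R E E rho0 rho1"
  unfolding rho0_def[abs_def] rho1_def[abs_def]
  by (rule hom_comp_derivation[OF td_derivation[OF R is_alg_E]
        alg_hom_comp[OF theta_alg_hom zero_lam_alg_hom] Tan_is_alg[OF R] is_alg_E tp_closed])

lemma rho0_closed: "z \<in> carrier E \<Longrightarrow> rho0 z \<in> carrier E"
  and rho1_closed: "z \<in> carrier E \<Longrightarrow> rho1 z \<in> carrier E"
  using alg_hom_closed[OF rho0_alg_hom] derivation_closed[OF rho1_derivation] by auto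

lemma pi0_zero: "pi0 \<zero>\<^bsub>E\<^esub> = \<zero>\<^bsub>E\<^esub>" and pi1_zero: "pi1 \<zero>\<^bsub>E\<^esub> = \<zero>\<^bsub>E\<^esub>"
  using alg_hom_zero[OF is_alg_E is_alg_E pi0_alg_hom] derivation_zero[OF R is_alg_E pi1_derivation] by auto

lemma
  assumes w: "w \<in> carrier TA"
  shows pi0_in1: "pi0 (in1 w) = in1 (lift R A (tp R TA w))"
    and pi1_in1: "pi1 (in1 w) = in1 (lift R A (td R TA w))"
    and rho0_in1: "rho0 (in1 w) = in1 w"
    and rho1_in1: "rho1 (in1 w) = \<zero>\<^bsub>E\<^esub>"
  using w by (simp_all add: pi0_def pi1_def rho0_def rho1_def theta_tp_in1 theta_td_in1 tp_closed td_closed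
      lift_zero_in1F zero_lam_in1F zmapT_tp[OF R A] zmapT_td[OF R A] in1_zero)

lemma
  assumes v: "v \<in> carrier SymM"
  shows pi0_in2: "pi0 (in2 v) = in2 v"
    and pi1_in2: "pi1 (in2 v) = \<zero>\<^bsub>E\<^esub>"
    and rho0_in2: "rho0 (in2 v) = in2 (lam R A M (tp R SymM v))"
    and rho1_in2: "rho1 (in2 v) = in2 (lam R A M (td R SymM v))"
  using v by (simp_all add: pi0_def pi1_def rho0_def rho1_def theta_tp_in2 theta_td_in2 tp_closed td_closed
      lift_zero_in2F zero_lam_in2F zmap_tp[OF R is_alg_SymM] zmap_td[OF R is_alg_SymM] in2_zero)

abbreviation tan_deg1 where "tan_deg1 \<equiv> lin_span A TA (tp R A) (td R A ` carrier A)"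

abbreviation sym_deg1 where "sym_deg1 \<equiv> lin_span A SymM (sq R A M) (sj R A M ` carrier M)"

lemma cring_A: "cring A"
  using is_algD(1)[OF A] .

lemma tp_ring_hom: "tp R A \<in> ring_hom A TA"
  and sq_ring_hom: "sq R A M \<in> ring_hom A SymM"
  using tp_alg_hom[OF R A] sq_alg_hom[OF R A] by (auto simp: alg_hom_def)

lemma td_image: "td R A ` carrier A \<subseteq> carrier TA"
  and sj_image: "sj R A M ` carrier M \<subseteq> carrier SymM"
  by (auto simp: td_closed sj_closed)

lemmas tan_deg1_closed = lin_span_closed[OF cring_A cring_TA tp_ring_hom td_image]
  and tan_deg1_base = lin_span_base[OF cring_A cring_TA tp_ring_hom td_image]
  and tan_deg1_smult = lin_span_smult[OF cring_A cring_TA tp_ring_hom td_image]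
  and sym_deg1_closed = lin_span_closed[OF cring_A cring_SymM sq_ring_hom sj_image]
  and sym_deg1_base = lin_span_base[OF cring_A cring_SymM sq_ring_hom sj_image]
  and sym_deg1_smult = lin_span_smult[OF cring_A cring_SymM sq_ring_hom sj_image]

lemma zero_in_tp_image: "\<zero>\<^bsub>TA\<^esub> \<in> tp R A ` carrier A"
  and zero_in_sq_image: "\<zero>\<^bsub>SymM\<^esub> \<in> sq R A M ` carrier A"
  using alg_hom_zero[OF A is_alg_TA tp_alg_hom[OF R A]] alg_hom_zero[OF A is_alg_SymM sq_alg_hom[OF R A]]
    cring.cring_simprules(2)[OF cring_A] by (metis image_eqI)+

lemma lift_graded:
  assumes w: "w \<in> carrier TA"
  shows "lift R A (tp R TA w) \<in> tp R A ` carrier A \<and> lift R A (td R TA w) \<in> tan_deg1"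
proof (rule pres_hom_deriv_lin_span[OF R A is_alg_TA Tan_def _ _ tp_alg_hom[OF R A] td_image _ w])
  show "alg_hom R TA TA (\<lambda>w. lift R A (tp R TA w))"
    by (rule alg_hom_comp[OF tp_alg_hom[OF R is_alg_TA] lift_alg_hom[OF R A]])
  show "derivation R TA TA (\<lambda>w. lift R A (tp R TA w)) (\<lambda>w. lift R A (td R TA w))"
    by (rule hom_comp_derivation[OF td_derivation[OF R is_alg_TA] lift_alg_hom[OF R A] is_alg_TTA is_alg_TA
          tp_closed])
  fix x assume "x \<in> TP ` carrier A \<union> TD ` carrier A"
  then show "lift R A (tp R TA (gen TA x)) \<in> tp R A ` carrier A \<and> lift R A (td R TA (gen TA x)) \<in> tan_deg1"
    by (auto simp flip: tp_def td_def simp: lift_tp_tp[OF R A] lift_tp_td[OF R A] lift_td_tp[OF R A]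
        lift_td_td[OF R A] zero_in_tp_image add_span.zero tan_deg1_base)
qed

lemma lam_graded:
  assumes v: "v \<in> carrier SymM"
  shows "lam R A M (tp R SymM v) \<in> sq R A M ` carrier A \<and> lam R A M (td R SymM v) \<in> sym_deg1"
proof (rule pres_hom_deriv_lin_span[OF R A is_alg_SymM Sym_def _ _ sq_alg_hom[OF R A] sj_image _ v])
  show "alg_hom R SymM SymM (\<lambda>v. lam R A M (tp R SymM v))"
    by (rule alg_hom_comp[OF tp_alg_hom[OF R is_alg_SymM] lam_alg_hom[OF R A M]])
  show "derivation R SymM SymM (\<lambda>v. lam R A M (tp R SymM v)) (\<lambda>v. lam R A M (td R SymM v))"
    by (rule hom_comp_derivation[OF td_derivation[OF R is_alg_SymM] lam_alg_hom[OF R A M] is_alg_TS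
          is_alg_SymM tp_closed])
  fix x assume "x \<in> SA ` carrier A \<union> SM ` carrier M"
  then show "lam R A M (tp R SymM (gen SymM x)) \<in> sq R A M ` carrier A
      \<and> lam R A M (td R SymM (gen SymM x)) \<in> sym_deg1"
    by (auto simp flip: sq_def sj_def simp: lam_tp_sq[OF R A M] lam_td_sq[OF R A M] lam_tp_sj[OF R A M]
        lam_td_sj[OF R A M] zero_in_sq_image add_span.zero sym_deg1_base)
qed

lemma jj_image_eq:
  "jj_image R A M = add_span E {in1 (td R A a) \<otimes>\<^bsub>E\<^esub> in2 (sj R A M m) | a m. a \<in> carrier A \<and> m \<in> carrier M}"
  by (simp add: jj_image_def etens_def)

lemma jj_gens_closed:
  "{in1 (td R A a) \<otimes>\<^bsub>E\<^esub> in2 (sj R A M m) | a m. a \<in> carrier A \<and> m \<in> carrier M} \<subseteq> carrier E"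
  using cring.cring_simprules(5)[OF cring_E] by (auto simp: in1_closed in2_closed td_closed sj_closed)

lemma jj_image_zero: "\<zero>\<^bsub>E\<^esub> \<in> jj_image R A M"
  and jj_image_add: "x \<in> jj_image R A M \<Longrightarrow> y \<in> jj_image R A M \<Longrightarrow> x \<oplus>\<^bsub>E\<^esub> y \<in> jj_image R A M"
  and jj_image_neg: "x \<in> jj_image R A M \<Longrightarrow> \<ominus>\<^bsub>E\<^esub> x \<in> jj_image R A M"
  by (simp_all add: jj_image_def add_span.intros)

lemma jj_image_smult:
  assumes c: "c \<in> carrier A" and z: "z \<in> jj_image R A M"
  shows "in1 (tp R A c) \<otimes>\<^bsub>E\<^esub> z \<in> jj_image R A M"
proof -
  interpret E: cring E by (rule cring_E)
  interpret M: module A M by (rule M)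
  have c1: "in1 (tp R A c) \<in> carrier E" using c by (simp add: in1_closed tp_closed)
  show ?thesis unfolding jj_image_eq
  proof (rule add_span_map[OF E.abelian_group_axioms E.abelian_group_axioms jj_gens_closed z[unfolded jj_image_eq]])
    fix s assume "s \<in> {in1 (td R A a) \<otimes>\<^bsub>E\<^esub> in2 (sj R A M m) | a m. a \<in> carrier A \<and> m \<in> carrier M}"
    then obtain a m where s: "s = in1 (td R A a) \<otimes>\<^bsub>E\<^esub> in2 (sj R A M m)" "a \<in> carrier A" "m \<in> carrier M"
      by blast
    have "in1 (tp R A c) \<otimes>\<^bsub>E\<^esub> s = in1 (td R A a) \<otimes>\<^bsub>E\<^esub> (in2 (sq R A M c) \<otimes>\<^bsub>E\<^esub> in2 (sj R A M m))"
      using s c by (simp add: in1_tp in1_closed in2_closed td_closed sq_closed sj_closed E.m_lcomm)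
    also have "\<dots> = in1 (td R A a) \<otimes>\<^bsub>E\<^esub> in2 (sj R A M (c \<odot>\<^bsub>M\<^esub> m))"
      using s c by (simp add: alg_hom_mult[OF in2_alg_hom] sq_closed sj_closed sj_smult[OF R A M])
    finally show "in1 (tp R A c) \<otimes>\<^bsub>E\<^esub> s
        \<in> add_span E {in1 (td R A a) \<otimes>\<^bsub>E\<^esub> in2 (sj R A M m) | a m. a \<in> carrier A \<and> m \<in> carrier M}"
      using s c by (auto intro!: add_span.base)
  qed (use c1 in \<open>simp_all add: E.r_distr E.r_minus\<close>)
qed

lemma jj_image_deg1_mult:
  assumes v: "v \<in> sym_deg1" and u: "u \<in> tan_deg1"
  shows "in2 v \<otimes>\<^bsub>E\<^esub> in1 u \<in> jj_image R A M"
proof -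
  interpret E: cring E by (rule cring_E)
  interpret S: cring SymM by (rule cring_SymM)
  interpret T: cring TA by (rule cring_TA)
  interpret M: module A M by (rule M)
  have in1u: "in1 u \<in> carrier E" using u by (simp add: in1_closed tan_deg1_closed)
  have base: "in2 s \<otimes>\<^bsub>E\<^esub> in1 u \<in> jj_image R A M"
    if "s \<in> {sq R A M c \<otimes>\<^bsub>SymM\<^esub> s' | c s'. c \<in> carrier A \<and> s' \<in> sj R A M ` carrier M}" for s
  proof -
    from that obtain c m where s: "s = sq R A M c \<otimes>\<^bsub>SymM\<^esub> sj R A M m" "c \<in> carrier A" "m \<in> carrier M"
      by blast
    then have "s = sj R A M (c \<odot>\<^bsub>M\<^esub> m)" by (simp add: sj_smult[OF R A M])
    then have in2s: "in2 s = in2 (sj R A M (c \<odot>\<^bsub>M\<^esub> m))" by simp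
    show ?thesis unfolding jj_image_eq
    proof (rule add_span_map[where f="\<lambda>u. in2 s \<otimes>\<^bsub>E\<^esub> in1 u",
          OF T.abelian_group_axioms E.abelian_group_axioms lin_span_gens_closed[OF cring_A cring_TA
            tp_ring_hom td_image] u])
      fix t assume "t \<in> {tp R A a \<otimes>\<^bsub>TA\<^esub> s' | a s'. a \<in> carrier A \<and> s' \<in> td R A ` carrier A}"
      then obtain a a' where t: "t = tp R A a \<otimes>\<^bsub>TA\<^esub> td R A a'" "a \<in> carrier A" "a' \<in> carrier A" by blast
      have "in2 s \<otimes>\<^bsub>E\<^esub> in1 t = in1 (td R A a') \<otimes>\<^bsub>E\<^esub> in2 (sj R A M (a \<odot>\<^bsub>M\<^esub> (c \<odot>\<^bsub>M\<^esub> m)))"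
        using s t by (simp add: in2s alg_hom_mult[OF in1_alg_hom] alg_hom_mult[OF in2_alg_hom] in1_tp
            sj_smult[OF R A M] tp_closed td_closed sq_closed sj_closed in1_closed in2_closed E.m_ac)
      then show "in2 s \<otimes>\<^bsub>E\<^esub> in1 t
          \<in> add_span E {in1 (td R A a) \<otimes>\<^bsub>E\<^esub> in2 (sj R A M m) | a m. a \<in> carrier A \<and> m \<in> carrier M}"
        using s t by (auto intro!: add_span.base)
    qed (use s in \<open>simp_all add: in1_closed in2_closed sq_closed sj_closed E.r_distr E.r_minus
        alg_hom_add[OF in1_alg_hom] alg_hom_neg[OF is_alg_TA is_alg_E in1_alg_hom] in1_zero\<close>)
  qed
  show ?thesis
    unfolding jj_image_eq
    by (rule add_span_map[where f="\<lambda>v. in2 v \<otimes>\<^bsub>E\<^esub> in1 u", OF S.abelian_group_axioms E.abelian_group_axioms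
          lin_span_gens_closed[OF cring_A cring_SymM sq_ring_hom sj_image] v])
       (use in1u base[unfolded jj_image_eq] in \<open>simp_all add: in2_closed E.l_distr E.l_minus alg_hom_add[OF in2_alg_hom]
        alg_hom_neg[OF is_alg_SymM is_alg_E in2_alg_hom] in2_zero\<close>)
qed

text \<open>The components of \<open>z\<close> of bidegree \<open>(0,0)\<close>, \<open>(1,0)\<close>, \<open>(0,1)\<close>, \<open>(1,1)\<close> come from \<open>A\<close>,
  \<open>\<Omega>(A)\<close>, \<open>M\<close> and \<open>\<Omega>(A) \<otimes>\<^sub>A M\<close>. These four statements are proved together by induction on \<open>z\<close>,
  since the product rule for \<open>pi1 \<circ> rho1\<close> involves all of them.\<close>

definition parts_graded where
  "parts_graded z \<longleftrightarrow> pi0 (rho0 z) \<in> (\<lambda>a. in1 (tp R A a)) ` carrier A \<and> pi1 (rho0 z) \<in> in1 ` tan_deg1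
     \<and> pi0 (rho1 z) \<in> in2 ` sym_deg1 \<and> pi1 (rho1 z) \<in> jj_image R A M"

lemma zero_in_in1_tan_deg1: "\<zero>\<^bsub>E\<^esub> \<in> in1 ` tan_deg1"
  and zero_in_in2_sym_deg1: "\<zero>\<^bsub>E\<^esub> \<in> in2 ` sym_deg1"
  by (rule image_eqI[where f=in1, OF in1_zero[symmetric] add_span.zero],
      rule image_eqI[where f=in2, OF in2_zero[symmetric] add_span.zero])

lemma parts_graded_in1:
  assumes w: "w \<in> carrier TA"
  shows "parts_graded (in1 w)"
proof -
  obtain a where a: "a \<in> carrier A" "lift R A (tp R TA w) = tp R A a" and u: "lift R A (td R TA w) \<in> tan_deg1"
    using lift_graded[OF w] by blast
  then show ?thesis
    unfolding parts_graded_def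
    by (auto simp: w rho0_in1 rho1_in1 pi0_in1 pi1_in1 pi0_zero pi1_zero
        zero_in_in2_sym_deg1 jj_image_zero)
qed

lemma parts_graded_in2:
  assumes v: "v \<in> carrier SymM"
  shows "parts_graded (in2 v)"
proof -
  obtain a where a: "a \<in> carrier A" "lam R A M (tp R SymM v) = sq R A M a"
    and v': "lam R A M (td R SymM v) \<in> sym_deg1"
    using lam_graded[OF v] by blast
  have "rho0 (in2 v) = in1 (tp R A a)" using a by (simp add: v rho0_in2 in1_tp)
  moreover have "pi0 (in1 (tp R A a)) = in1 (tp R A a)" "pi1 (in1 (tp R A a)) = \<zero>\<^bsub>E\<^esub>"
    using a by (simp_all add: tp_closed pi0_in1 pi1_in1 lift_tp_tp[OF R A] lift_td_tp[OF R A] in1_zero)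
  moreover have "pi0 (rho1 (in2 v)) = rho1 (in2 v)" "pi1 (rho1 (in2 v)) = \<zero>\<^bsub>E\<^esub>"
    using v' by (simp_all add: v rho1_in2 pi0_in2 pi1_in2 sym_deg1_closed)
  ultimately show ?thesis
    using a v' unfolding parts_graded_def
    by (auto simp: v rho1_in2 zero_in_in1_tan_deg1 jj_image_zero)
qed

lemma parts_graded_rmap:
  assumes r: "r \<in> carrier R"
  shows "parts_graded (rmap E r)"
proof -
  have "alg_hom R A E (\<lambda>a. in1 (tp R A a))" by (rule alg_hom_comp[OF tp_alg_hom[OF R A] in1_alg_hom])
  then have "in1 (tp R A (rmap A r)) = rmap E r" using alg_hom_rmap r by fastforce
  then have "pi0 (rho0 (rmap E r)) = in1 (tp R A (rmap A r))"
    using r by (simp add: alg_hom_rmap[OF rho0_alg_hom] alg_hom_rmap[OF pi0_alg_hom])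
  then show ?thesis
    using r unfolding parts_graded_def
    by (auto simp: alg_hom_rmap[OF rho0_alg_hom] derivation_rmap[OF pi1_derivation]
        derivation_rmap[OF rho1_derivation] pi0_zero pi1_zero is_alg_rmap_closed[OF A]
        zero_in_in1_tan_deg1 zero_in_in2_sym_deg1 jj_image_zero)
qed

lemma parts_graded_add:
  assumes X: "X \<in> carrier E" and Y: "Y \<in> carrier E" and "parts_graded X" "parts_graded Y"
  shows "parts_graded (X \<oplus>\<^bsub>E\<^esub> Y)"
proof -
  from assms(3) obtain a u v where X_parts: "a \<in> carrier A" "pi0 (rho0 X) = in1 (tp R A a)"
      "u \<in> tan_deg1" "pi1 (rho0 X) = in1 u" "v \<in> sym_deg1" "pi0 (rho1 X) = in2 v"
      "pi1 (rho1 X) \<in> jj_image R A M"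
    unfolding parts_graded_def by blast
  from assms(4) obtain b u' v' where Y_parts: "b \<in> carrier A" "pi0 (rho0 Y) = in1 (tp R A b)"
      "u' \<in> tan_deg1" "pi1 (rho0 Y) = in1 u'" "v' \<in> sym_deg1" "pi0 (rho1 Y) = in2 v'"
      "pi1 (rho1 Y) \<in> jj_image R A M"
    unfolding parts_graded_def by blast
  note closed = X Y rho0_closed rho1_closed tan_deg1_closed sym_deg1_closed tp_closed[of _ A R]
  have "pi0 (rho0 (X \<oplus>\<^bsub>E\<^esub> Y)) = in1 (tp R A (a \<oplus>\<^bsub>A\<^esub> b))"
    using X_parts Y_parts
    by (simp add: closed alg_hom_add[OF rho0_alg_hom] alg_hom_add[OF pi0_alg_hom] alg_hom_add[OF tp_alg_hom[OF R A]]
        alg_hom_add[OF in1_alg_hom])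
  moreover have "pi1 (rho0 (X \<oplus>\<^bsub>E\<^esub> Y)) = in1 (u \<oplus>\<^bsub>TA\<^esub> u')"
    using X_parts Y_parts
    by (simp add: closed alg_hom_add[OF rho0_alg_hom] derivation_add[OF pi1_derivation] alg_hom_add[OF in1_alg_hom])
  moreover have "pi0 (rho1 (X \<oplus>\<^bsub>E\<^esub> Y)) = in2 (v \<oplus>\<^bsub>SymM\<^esub> v')"
    using X_parts Y_parts
    by (simp add: closed derivation_add[OF rho1_derivation] alg_hom_add[OF pi0_alg_hom] alg_hom_add[OF in2_alg_hom])
  moreover have "pi1 (rho1 (X \<oplus>\<^bsub>E\<^esub> Y)) = pi1 (rho1 X) \<oplus>\<^bsub>E\<^esub> pi1 (rho1 Y)"
    by (simp add: closed derivation_add[OF rho1_derivation] derivation_add[OF pi1_derivation])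
  ultimately show ?thesis
    using X_parts Y_parts cring.cring_simprules(1)[OF cring_A] unfolding parts_graded_def
    by (auto intro: add_span.add jj_image_add)
qed

lemma parts_graded_neg:
  assumes X: "X \<in> carrier E" and "parts_graded X"
  shows "parts_graded (\<ominus>\<^bsub>E\<^esub> X)"
proof -
  from assms(2) obtain a u v where X_parts: "a \<in> carrier A" "pi0 (rho0 X) = in1 (tp R A a)"
      "u \<in> tan_deg1" "pi1 (rho0 X) = in1 u" "v \<in> sym_deg1" "pi0 (rho1 X) = in2 v"
      "pi1 (rho1 X) \<in> jj_image R A M"
    unfolding parts_graded_def by blast
  note closed = X rho0_closed rho1_closed tan_deg1_closed sym_deg1_closed tp_closed[of _ A R]
  note neg = alg_hom_neg[OF is_alg_E is_alg_E rho0_alg_hom] alg_hom_neg[OF is_alg_E is_alg_E pi0_alg_hom]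
    derivation_neg[OF R is_alg_E is_alg_E pi1_derivation] derivation_neg[OF R is_alg_E is_alg_E rho1_derivation]
  have "pi0 (rho0 (\<ominus>\<^bsub>E\<^esub> X)) = in1 (tp R A (\<ominus>\<^bsub>A\<^esub> a))"
    using X_parts
    by (simp add: closed neg alg_hom_neg[OF A is_alg_TA tp_alg_hom[OF R A]] alg_hom_neg[OF is_alg_TA is_alg_E in1_alg_hom])
  moreover have "pi1 (rho0 (\<ominus>\<^bsub>E\<^esub> X)) = in1 (\<ominus>\<^bsub>TA\<^esub> u)"
    using X_parts by (simp add: closed neg alg_hom_neg[OF is_alg_TA is_alg_E in1_alg_hom])
  moreover have "pi0 (rho1 (\<ominus>\<^bsub>E\<^esub> X)) = in2 (\<ominus>\<^bsub>SymM\<^esub> v)"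
    using X_parts by (simp add: closed neg alg_hom_neg[OF is_alg_SymM is_alg_E in2_alg_hom])
  moreover have "pi1 (rho1 (\<ominus>\<^bsub>E\<^esub> X)) = \<ominus>\<^bsub>E\<^esub> pi1 (rho1 X)"
    by (simp add: closed neg)
  ultimately show ?thesis
    using X_parts cring.cring_simprules(3)[OF cring_A] unfolding parts_graded_def
    by (auto intro: add_span.neg jj_image_neg)
qed

lemma parts_graded_mult:
  assumes X: "X \<in> carrier E" and Y: "Y \<in> carrier E" and "parts_graded X" "parts_graded Y"
  shows "parts_graded (X \<otimes>\<^bsub>E\<^esub> Y)"
proof -
  from assms(3) obtain a u v where X_parts: "a \<in> carrier A" "pi0 (rho0 X) = in1 (tp R A a)"
      "u \<in> tan_deg1" "pi1 (rho0 X) = in1 u" "v \<in> sym_deg1" "pi0 (rho1 X) = in2 v"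
      "pi1 (rho1 X) \<in> jj_image R A M"
    unfolding parts_graded_def by blast
  from assms(4) obtain b u' v' where Y_parts: "b \<in> carrier A" "pi0 (rho0 Y) = in1 (tp R A b)"
      "u' \<in> tan_deg1" "pi1 (rho0 Y) = in1 u'" "v' \<in> sym_deg1" "pi0 (rho1 Y) = in2 v'"
      "pi1 (rho1 Y) \<in> jj_image R A M"
    unfolding parts_graded_def by blast
  note closed = X Y rho0_closed rho1_closed tan_deg1_closed sym_deg1_closed tp_closed[of _ A R] sq_closed
  have "pi0 (rho0 (X \<otimes>\<^bsub>E\<^esub> Y)) = in1 (tp R A (a \<otimes>\<^bsub>A\<^esub> b))"
    using X_parts Y_parts
    by (simp add: closed alg_hom_mult[OF rho0_alg_hom] alg_hom_mult[OF pi0_alg_hom]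
        alg_hom_mult[OF tp_alg_hom[OF R A]] alg_hom_mult[OF in1_alg_hom])
  moreover have "pi1 (rho0 (X \<otimes>\<^bsub>E\<^esub> Y)) = in1 (tp R A a \<otimes>\<^bsub>TA\<^esub> u' \<oplus>\<^bsub>TA\<^esub> tp R A b \<otimes>\<^bsub>TA\<^esub> u)"
    using X_parts Y_parts cring.cring_simprules(5)[OF cring_TA]
    by (simp add: closed alg_hom_mult[OF rho0_alg_hom] derivation_mult[OF pi1_derivation]
        alg_hom_add[OF in1_alg_hom] alg_hom_mult[OF in1_alg_hom])
  moreover have "pi0 (rho1 (X \<otimes>\<^bsub>E\<^esub> Y)) = in2 (sq R A M a \<otimes>\<^bsub>SymM\<^esub> v' \<oplus>\<^bsub>SymM\<^esub> sq R A M b \<otimes>\<^bsub>SymM\<^esub> v)"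
    using X_parts Y_parts cring.cring_simprules(5)[OF cring_SymM] cring.cring_simprules(5)[OF cring_E]
    by (simp add: closed derivation_mult[OF rho1_derivation] alg_hom_add[OF pi0_alg_hom] alg_hom_mult[OF pi0_alg_hom]
        alg_hom_add[OF in2_alg_hom] alg_hom_mult[OF in2_alg_hom] in1_tp)
  moreover have "pi1 (rho1 (X \<otimes>\<^bsub>E\<^esub> Y)) =
      (in1 (tp R A a) \<otimes>\<^bsub>E\<^esub> pi1 (rho1 Y) \<oplus>\<^bsub>E\<^esub> in2 v' \<otimes>\<^bsub>E\<^esub> in1 u)
      \<oplus>\<^bsub>E\<^esub> (in1 (tp R A b) \<otimes>\<^bsub>E\<^esub> pi1 (rho1 X) \<oplus>\<^bsub>E\<^esub> in2 v \<otimes>\<^bsub>E\<^esub> in1 u')"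
    using X_parts Y_parts cring.cring_simprules(5)[OF cring_E]
    by (simp add: closed derivation_mult[OF rho1_derivation] derivation_add[OF pi1_derivation]
        derivation_mult[OF pi1_derivation])
  ultimately show ?thesis
    using X_parts Y_parts cring.cring_simprules(5)[OF cring_A] unfolding parts_graded_def
    by (auto intro!: add_span.add tan_deg1_smult sym_deg1_smult jj_image_add jj_image_smult jj_image_deg1_mult)
qed

lemma E_pres: "E = pres R (TL ` carrier TA \<union> TR ` carrier SymM)
    (hom_rel R TA TL \<union> hom_rel R SymM TR \<union> {(Var (TL (tp R A c)), Var (TR (sq R A M c))) | c. c \<in> carrier A})"
  by (simp add: TE_def tens_def)

lemma parts_graded:
  assumes z: "z \<in> carrier E"
  shows "parts_graded z"
  using R z[unfolded E_pres]
proof (induction rule: pres_induct)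
  case (gen x) then show ?case using parts_graded_in1 parts_graded_in2 E_pres by auto
qed (simp_all add: E_pres[symmetric] parts_graded_rmap parts_graded_add parts_graded_neg parts_graded_mult)

lemma fixed_by_pi1_rho1_in_jj_image:
  assumes "z \<in> carrier E" "pi1 z = z" "rho1 z = z"
  shows "z \<in> jj_image R A M"
  using parts_graded[OF assms(1)] assms(2,3) by (simp add: parts_graded_def)

lemma horizontal_connection_td_sj_in_jj_image:
  assumes hc: "horizontal_connection R A M H" and m: "m \<in> carrier M"
  shows "H (td R SymM (sj R A M m)) \<in> jj_image R A M"
proof -
  have H: "alg_hom R TS E H"
    and H3: "\<forall>x\<in>carrier (Tan R TS). lift_zero (theta R A M (Tmap R TS E H x)) = H (lift R SymM x)"
    and H4: "\<forall>x\<in>carrier (Tan R TS).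
      zero_lam (theta R A M (Tmap R TS E H x)) = H (Tmap R TS SymM (lam R A M) (canflip R SymM x))"
    using hc unfolding horizontal_connection_def by auto
  let ?s = "sj R A M m"
  let ?x = "td R TS (td R SymM ?s)"
  have s: "?s \<in> carrier SymM" using m by (rule sj_closed)
  have ds: "td R SymM ?s \<in> carrier TS" using s by (rule td_closed)
  have x: "?x \<in> carrier (Tan R TS)" using ds by (rule td_closed)
  define X where "X = H (td R SymM ?s)"
  have X: "X \<in> carrier E" unfolding X_def using alg_hom_closed[OF H ds] .
  have TH: "Tmap R TS E H ?x = td R E X"
    unfolding X_def by (rule Tmap_td[OF R is_alg_TS is_alg_E H ds])
  have "pi1 X = lift_zero (theta R A M (Tmap R TS E H ?x))" by (simp add: pi1_def TH)
  also have "\<dots> = H (lift R SymM ?x)" using H3 x by blast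
  also have "\<dots> = X" by (simp add: lift_td_td[OF R is_alg_SymM s] X_def)
  finally have pi1_X: "pi1 X = X" .
  have "rho1 X = zero_lam (theta R A M (Tmap R TS E H ?x))" by (simp add: rho1_def TH)
  also have "\<dots> = H (Tmap R TS SymM (lam R A M) (canflip R SymM ?x))" using H4 x by blast
  also have "\<dots> = X"
    by (simp add: canflip_td_td[OF R is_alg_SymM s] Tmap_td[OF R is_alg_TS is_alg_SymM lam_alg_hom[OF R A M] ds]
        lam_td_sj[OF R A M m] X_def)
  finally have rho1_X: "rho1 X = X" .
  show ?thesis
    using fixed_by_pi1_rho1_in_jj_image[OF X pi1_X rho1_X] by (simp add: X_def)
qed

end

theorem mainTheorem6:
  fixes R :: "'r ring" and A :: "('a, 'r) ralg" and M :: "('a, 'm) module"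
  assumes "cring R" and "is_alg R A" and "module A M"
    and "horizontal_connection R A M H"
  shows "\<forall>m\<in>carrier M. H (td R (Sym R A M) (sj R A M m)) \<in> jj_image R A M"
proof -
  interpret alg_module R A M using assms(1-3) by (rule alg_module.intro)
  show ?thesis using horizontal_connection_td_sj_in_jj_image[OF assms(4)] by blast
qed

end
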